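(* In the changepoint model of the context, let $f:\mathbb X\to\mathbb R^u$ be measurable and integrable with respect to all $H_{ji}$, and set $H^f_{ji}=\int f(x)\,H_{ji}(dx)$. Then for $0<i<n$, $$\mathbb E[f(X_i)\mid Y_{1:n}=y_{1:n}]=\mathbb E[f(X_{i+1})\mid Y_{1:n}=y_{1:n}]-\sum_{\ell=i+1}^{n-1}H^f_{i+1,\ell}\,\tilde c_{i+1,\ell}\,\tilde q_{\ell+1}-H^f_{i+1,n}\,\tilde c_{i+1,n}+\sum_{\ell=0}^{i}H^f_{\ell i}\,\tilde c_{\ell i}\,\tilde q_{i+1}.$$
   Context: Model: Let $n\ge 1$ and fix observed data $y_1,\dots,y_n$. Let $(\mathbb X,\mathcal X)$, $(\mathbb Y,\mathcal Y)$ be standard Borel spaces, $\psi$ a $\sigma$-finite measure on $(\mathbb Y,\mathcal Y)$, $\mathcal J$ a probability measure on $(\mathbb X,\mathcal X)$, and $q_{ji}\in[0,1]$ for $0\le j<i\le n$. The model consists of random variables $C_i\in\{0,\dots,i\}$, $X_i\in\mathbb X$, $Y_i\in\mathbb Y$, $i=1,\dots,n$, with joint law factorizing as: $P(C_1=0)=q_{01}$, $P(C_1=1)=1-q_{01}$; for $i\ge2$, $C_i$ depends on the past only through $C_{i-1}$, with $P(C_i=j\mid C_{i-1}=j)=q_{ji}$ and $P(C_i=i\mid C_{i-1}=j)=1-q_{ji}$ ($0\le j\le i-1$); $X_1\sim\mathcal J$ independent of $C_1$; for $i\ge 2$, $X_i$ depends on the past only through $(C_i,X_{i-1})$, with $X_i\sim\mathcal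 J$ if $C_i=i$ and $X_i=X_{i-1}$ if $C_i<i$; $Y_i$ depends on all other variables only through $X_i$, with density $p(Y_i=y\mid X_i=x)$ w.r.t. $\psi$. Assume $\int\prod_{\ell=j}^i p(Y_\ell=y_\ell\mid X_\ell=x)\,\mathcal J(dx)>0$ for all $0<j\le i\le n$. $Y_{a:b}=y_{a:b}$ abbreviates $Y_a=y_a,\dots,Y_b=y_b$. Notation: $H_{ji}=P(X_i\in\cdot\mid C_i=j,Y_{1:i}=y_{1:i})$; $\tilde c_{ji}=P(C_i=j\mid C_{i+1}=i+1,Y_{1:i}=y_{1:i})$ for $0<i<n$, and $\tilde c_{jn}=P(C_n=j\mid Y_{1:n}=y_{1:n})$; $\tilde q_i=P(C_i=i\mid Y_{1:n}=y_{1:n})$. *)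

theory Defs
  imports "HOL-Probability.Probability"
begin

(* A realisation of the hidden variables is a pair
   omega = (c, z): c is a changepoint path (c i = C_i for i = 1..n, c i = 0 otherwise),
   z \<in> X^{1..n} are i.i.d. J "segment values"; X_i = z (max C_i 1), i.e. the value drawn
   at the start of the current segment (segment starting before time 1 uses z 1). *)

definition cp_paths :: "nat \<Rightarrow> (nat \<Rightarrow> nat) set" where
  "cp_paths n = {c. (\<forall>i. c i \<le> i) \<and> (\<forall>i. i \<notin> {1..n} \<longrightarrow> c i = 0)
                    \<and> (\<forall>i\<in>{2..n}. c i = c (i - 1) \<or> c i = i)}"

(* prior probability of a path: P(C_1 = 0) = q 0 1, P(C_1 = 1) = 1 - q 0 1,
   P(C_i = j | C_{i-1} = j) = q j i, P(C_i = i | C_{i-1} = j) = 1 - q j i *)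
definition cp_weight :: "(nat \<Rightarrow> nat \<Rightarrow> real) \<Rightarrow> nat \<Rightarrow> (nat \<Rightarrow> nat) \<Rightarrow> real" where
  "cp_weight q n c = (\<Prod>i\<in>{1..n}.
      if i = 1 then (if c 1 = 0 then q 0 1 else 1 - q 0 1)
      else if c i = i then 1 - q (c (i - 1)) i else q (c i) i)"

definition cp_prior :: "(nat \<Rightarrow> nat \<Rightarrow> real) \<Rightarrow> nat \<Rightarrow> 'x measure
    \<Rightarrow> ((nat \<Rightarrow> nat) \<times> (nat \<Rightarrow> 'x)) measure" where
  "cp_prior q n J = point_measure (cp_paths n) (\<lambda>c. ennreal (cp_weight q n c))
                    \<Otimes>\<^sub>M (\<Pi>\<^sub>M i\<in>{1..n}. J)"

definition cp_C :: "nat \<Rightarrow> (nat \<Rightarrow> nat) \<times> (nat \<Rightarrow> 'x) \<Rightarrow> nat" where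
  "cp_C i \<omega> = fst \<omega> i"

definition cp_X :: "nat \<Rightarrow> (nat \<Rightarrow> nat) \<times> (nat \<Rightarrow> 'x) \<Rightarrow> 'x" where
  "cp_X i \<omega> = snd \<omega> (max (fst \<omega> i) 1)"

definition cp_lik :: "('x \<Rightarrow> 'y \<Rightarrow> real) \<Rightarrow> (nat \<Rightarrow> 'y) \<Rightarrow> nat
    \<Rightarrow> (nat \<Rightarrow> nat) \<times> (nat \<Rightarrow> 'x) \<Rightarrow> real" where
  "cp_lik p y m \<omega> = (\<Prod>l\<in>{1..m}. p (cp_X l \<omega>) (y l))"

definition normalize_by :: "'a measure \<Rightarrow> ('a \<Rightarrow> real) \<Rightarrow> 'a measure" where
  "normalize_by M g = density M (\<lambda>\<omega>. ennreal (g \<omega>) / (\<integral>\<^sup>+\<omega>'. ennreal (g \<omega>') \<partial>M))"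

definition cond_on :: "'a measure \<Rightarrow> 'a set \<Rightarrow> 'a measure" where
  "cond_on M A = (if emeasure M A = 0 then null_measure M
                  else density M (\<lambda>\<omega>. indicator A \<omega> / emeasure M A))"

definition cp_post where
  "cp_post q n J p y m = normalize_by (cp_prior q n J) (cp_lik p y m)"

definition cp_ev where
  "cp_ev q n J i j = {\<omega> \<in> space (cp_prior q n J). cp_C i \<omega> = j}"

definition cp_H where
  "cp_H q n J p y j i = distr (cond_on (cp_post q n J p y i) (cp_ev q n J i j)) J (cp_X i)"

definition cp_ct where
  "cp_ct q n J p y j i =
     (if i < n then measure (cond_on (cp_post q n J p y i) (cp_ev q n J (i + 1) (i + 1))) (cp_ev q n J i j)
      else measure (cp_post q n J p y n) (cp_ev q n J n j))"

definition cp_qt where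
  "cp_qt q n J p y i = measure (cp_post q n J p y n) (cp_ev q n J i i)"

end

(* Given the change-point path C, integrating out the i.i.d. segment values factorises the
   likelihood over segments, so the unnormalised posterior mass of any event about C (weighted by
   g(X_k)) is a finite sum over paths of prior weight times a product of per-segment integrals.
   If C_{b+1} = b+1, a path splits into a head on 1..b and a tail on b+1..n that do not interact,
   and the masses under Y_{1:b} and under Y_{1:n} factor through the same head. This Markov
   property gives P(C_b = a, C_{b+1} = b+1, X_b in S | Y_{1:n}) = c~_{ab} q~_{b+1} H_{ab}(S), and
   P(C_n = a, X_n in S | Y_{1:n}) = c~_{an} H_{an}(S). Since X_k = X_b for the last time b of the
   segment containing k, f(X_k) is the sum over b >= k and a <= k of 1[C_b = a, b ends a segment]
   f(X_b); taking posterior expectations for k = i and k = i+1 and subtracting gives the formula. *)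

theory Submission
  imports Defs
begin

definition cp_trans :: "(nat \<Rightarrow> nat \<Rightarrow> real) \<Rightarrow> (nat \<Rightarrow> nat) \<Rightarrow> nat \<Rightarrow> real" where
  "cp_trans q c i = (if c i = i then 1 - q (c (i - 1)) i else q (c i) i)"

definition cp_trans_probs :: "nat \<Rightarrow> (nat \<Rightarrow> nat \<Rightarrow> real) \<Rightarrow> bool" where
  "cp_trans_probs n q \<longleftrightarrow> (\<forall>j k. j < k \<longrightarrow> k \<le> n \<longrightarrow> 0 \<le> q j k \<and> q j k \<le> 1)"

lemma cp_trans_probs_mono: "cp_trans_probs n q \<Longrightarrow> m \<le> n \<Longrightarrow> cp_trans_probs m q"
  by (auto simp: cp_trans_probs_def)

lemma cp_pathsD:
  assumes "c \<in> cp_paths n"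
  shows "c i \<le> i" "i \<notin> {1..n} \<Longrightarrow> c i = 0" "i \<in> {2..n} \<Longrightarrow> c i = c (i - 1) \<or> c i = i"
  using assms by (auto simp: cp_paths_def)

lemma cp_paths_0: "cp_paths 0 = {\<lambda>_. 0}"
  by (auto simp: cp_paths_def)

lemma cp_paths_extend:
  assumes c: "c \<in> cp_paths m" and x: "x = Suc m \<or> x = c m"
  shows "c(Suc m := x) \<in> cp_paths (Suc m)"
proof -
  have "x \<le> Suc m" using x cp_pathsD(1)[OF c, of m] by auto
  moreover have "(c(Suc m := x)) i = (c(Suc m := x)) (i - 1) \<or> (c(Suc m := x)) i = i"
    if "i \<in> {2..Suc m}" for i
    using that x cp_pathsD(3)[OF c, of i] by (cases "i = Suc m") auto
  ultimately show ?thesis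
    using c unfolding cp_paths_def by auto
qed

lemma cp_paths_restrict:
  assumes c: "c \<in> cp_paths (Suc m)"
  shows "c(Suc m := 0) \<in> cp_paths m" "c (Suc m) = Suc m \<or> c (Suc m) = c m"
proof -
  show "c(Suc m := 0) \<in> cp_paths m"
    using c unfolding cp_paths_def by (auto simp: not_less_eq_eq)
  show "c (Suc m) = Suc m \<or> c (Suc m) = c m"
  proof (cases m)
    case 0
    then show ?thesis using cp_pathsD(1)[OF c, of 1] cp_pathsD(2)[OF c, of 0] by auto
  next
    case (Suc k)
    then show ?thesis using cp_pathsD(3)[OF c, of "Suc m"] by auto
  qed
qed

lemma cp_paths_Suc:
  "cp_paths (Suc m) = (\<lambda>c. c(Suc m := Suc m)) ` cp_paths m \<union> (\<lambda>c. c(Suc m := c m)) ` cp_paths m"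
proof (intro equalityI subsetI)
  fix c assume c: "c \<in> cp_paths (Suc m)"
  let ?c' = "c(Suc m := 0)"
  have "?c' m = c m" by simp
  then have "c = ?c'(Suc m := Suc m) \<or> c = ?c'(Suc m := ?c' m)"
    using cp_paths_restrict(2)[OF c] by (auto simp: fun_eq_iff)
  then show "c \<in> (\<lambda>c. c(Suc m := Suc m)) ` cp_paths m \<union> (\<lambda>c. c(Suc m := c m)) ` cp_paths m"
    using cp_paths_restrict(1)[OF c] by blast
qed (auto intro: cp_paths_extend)

lemma finite_cp_paths: "finite (cp_paths n)"
  by (induction n) (simp_all add: cp_paths_0 cp_paths_Suc)

lemma sum_cp_paths_Suc:
  fixes G :: "(nat \<Rightarrow> nat) \<Rightarrow> 'a::comm_monoid_add"
  shows "(\<Sum>c\<in>cp_paths (Suc m). G c) =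
     (\<Sum>c\<in>cp_paths m. G (c(Suc m := Suc m)) + G (c(Suc m := c m)))"
proof -
  have inj: "inj_on (\<lambda>c. c(Suc m := x c)) (cp_paths m)" for x :: "(nat \<Rightarrow> nat) \<Rightarrow> nat"
  proof (rule inj_onI)
    fix c d assume c: "c \<in> cp_paths m" and d: "d \<in> cp_paths m" and eq: "c(Suc m := x c) = d(Suc m := x d)"
    show "c = d"
    proof
      fix i show "c i = d i"
        using fun_cong[OF eq, of i] cp_pathsD(2)[OF c, of i] cp_pathsD(2)[OF d, of i]
        by (cases "i = Suc m") auto
    qed
  qed
  have disj: "(\<lambda>c. c(Suc m := Suc m)) ` cp_paths m \<inter> (\<lambda>c. c(Suc m := c m)) ` cp_paths m = {}"
  proof safe
    fix c d assume "d \<in> cp_paths m" and eq: "c(Suc m := Suc m) = d(Suc m := d m)"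
    have "Suc m = d m" using fun_cong[OF eq, of "Suc m"] by simp
    then show "c(Suc m := Suc m) \<in> {}" using cp_pathsD(1)[OF \<open>d \<in> cp_paths m\<close>, of m] by simp
  qed
  have "(\<Sum>c\<in>cp_paths (Suc m). G c) =
      sum G ((\<lambda>c. c(Suc m := Suc m)) ` cp_paths m) + sum G ((\<lambda>c. c(Suc m := c m)) ` cp_paths m)"
    unfolding cp_paths_Suc by (rule sum.union_disjoint) (simp_all add: finite_cp_paths disj)
  also have "\<dots> = (\<Sum>c\<in>cp_paths m. G (c(Suc m := Suc m))) + (\<Sum>c\<in>cp_paths m. G (c(Suc m := c m)))"
    using inj[of "\<lambda>_. Suc m"] inj[of "\<lambda>c. c m"] by (simp add: sum.reindex)
  finally show ?thesis by (simp add: sum.distrib)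
qed

lemma cp_weight_eq_prod_cp_trans:
  assumes "c \<in> cp_paths n"
  shows "cp_weight q n c = (\<Prod>i\<in>{1..n}. cp_trans q c i)"
  unfolding cp_weight_def
proof (rule prod.cong[OF refl])
  fix i
  have "c 0 = 0" "c 1 \<le> 1" using cp_pathsD(1,2)[OF assms] by auto
  then show "(if i = 1 then if c 1 = 0 then q 0 1 else 1 - q 0 1
         else if c i = i then 1 - q (c (i - 1)) i else q (c i) i) = cp_trans q c i"
    by (cases "c 1 = 0") (auto simp: cp_trans_def)
qed

lemma cp_weight_Suc:
  assumes c: "c \<in> cp_paths m" and x: "x = Suc m \<or> x = c m"
  shows "cp_weight q (Suc m) (c(Suc m := x)) = cp_weight q m c * cp_trans q (c(Suc m := x)) (Suc m)"
proof -
  have "cp_weight q (Suc m) (c(Suc m := x)) = (\<Prod>i\<in>{1..Suc m}. cp_trans q (c(Suc m := x)) i)"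
    by (rule cp_weight_eq_prod_cp_trans[OF cp_paths_extend[OF c x]])
  also have "\<dots> = (\<Prod>i\<in>{1..m}. cp_trans q (c(Suc m := x)) i) * cp_trans q (c(Suc m := x)) (Suc m)"
    by (simp add: atLeastAtMostSuc_conv)
  also have "(\<Prod>i\<in>{1..m}. cp_trans q (c(Suc m := x)) i) = (\<Prod>i\<in>{1..m}. cp_trans q c i)"
    by (rule prod.cong) (auto simp: cp_trans_def)
  also have "\<dots> = cp_weight q m c" using cp_weight_eq_prod_cp_trans[OF c] by simp
  finally show ?thesis .
qed

lemma cp_trans_new_segment: "cp_trans q (c(Suc m := Suc m)) (Suc m) = 1 - q (c m) (Suc m)"
  by (simp add: cp_trans_def)

lemma cp_trans_same_segment: "c \<in> cp_paths m \<Longrightarrow> cp_trans q (c(Suc m := c m)) (Suc m) = q (c m) (Suc m)"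
  using cp_pathsD(1)[of c m m] by (auto simp: cp_trans_def)

lemma cp_trans_nonneg:
  assumes "cp_trans_probs n q" "c \<in> cp_paths n" "i \<in> {1..n}"
  shows "0 \<le> cp_trans q c i"
proof -
  have "c i \<le> i" "c (i - 1) < i"
    using cp_pathsD(1)[OF assms(2), of i] cp_pathsD(1)[OF assms(2), of "i - 1"] assms(3) by auto
  then show ?thesis using assms(1,3) unfolding cp_trans_probs_def cp_trans_def
    by (cases "c i = i") auto
qed

lemma cp_weight_nonneg:
  assumes "cp_trans_probs n q" "c \<in> cp_paths n"
  shows "0 \<le> cp_weight q n c"
  using cp_trans_nonneg[OF assms] cp_weight_eq_prod_cp_trans[OF assms(2)] by (auto intro!: prod_nonneg)

lemma sum_cp_weight_marginal:
  fixes F :: "(nat \<Rightarrow> nat) \<Rightarrow> ennreal"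
  assumes q: "cp_trans_probs n q" and mn: "m \<le> n"
    and F: "\<And>c c'. (\<And>k. k \<le> m \<Longrightarrow> c k = c' k) \<Longrightarrow> F c = F c'"
  shows "(\<Sum>c\<in>cp_paths n. ennreal (cp_weight q n c) * F c) = (\<Sum>c\<in>cp_paths m. ennreal (cp_weight q m c) * F c)"
  using mn q
proof (induction n)
  case (Suc n)
  show ?case
  proof (cases "m = Suc n")
    case False
    then have mn: "m \<le> n" using Suc.prems by simp
    have qn: "cp_trans_probs n q" using Suc.prems cp_trans_probs_mono by auto
    have "(\<Sum>c\<in>cp_paths (Suc n). ennreal (cp_weight q (Suc n) c) * F c)
      = (\<Sum>c\<in>cp_paths n. ennreal (cp_weight q n c) * F c)"
      unfolding sum_cp_paths_Suc
    proof (rule sum.cong[OF refl])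
      fix c assume c: "c \<in> cp_paths n"
      have F1: "F (c(Suc n := Suc n)) = F c" "F (c(Suc n := c n)) = F c"
        by (rule F; use mn in auto)+
      have "c n < Suc n" using cp_pathsD(1)[OF c, of n] by simp
      then have r: "0 \<le> q (c n) (Suc n)" "q (c n) (Suc n) \<le> 1"
        using Suc.prems(2) unfolding cp_trans_probs_def by auto
      have w: "0 \<le> cp_weight q n c" using cp_weight_nonneg[OF qn c] .
      have "ennreal (1 - q (c n) (Suc n)) + ennreal (q (c n) (Suc n)) = 1"
        using r by (subst ennreal_plus[symmetric]) auto
      then show "ennreal (cp_weight q (Suc n) (c(Suc n := Suc n))) * F (c(Suc n := Suc n)) +
            ennreal (cp_weight q (Suc n) (c(Suc n := c n))) * F (c(Suc n := c n)) =
            ennreal (cp_weight q n c) * F c"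
        unfolding F1 cp_weight_Suc[OF c, of "Suc n", simplified] cp_weight_Suc[OF c, of "c n", simplified]
          cp_trans_new_segment cp_trans_same_segment[OF c]
        using r w by (simp add: ennreal_mult mult.assoc flip: distrib_left distrib_right)
    qed
    then show ?thesis using Suc.IH[OF mn qn] by simp
  qed simp
qed simp

lemma cp_path_mono:
  assumes c: "c \<in> cp_paths n" and l: "l \<le> n" and l': "l' \<le> l"
  shows "c l' \<le> c l"
  using l l'
proof (induction l)
  case (Suc l)
  show ?case
  proof (cases "l' = Suc l")
    case False
    then have "c l' \<le> c l" using Suc by simp
    moreover have "c l \<le> c (Suc l)"
    proof (cases l)
      case 0 then show ?thesis using cp_pathsD(2)[OF c, of 0] by simp
    next
      case (Suc l0)
      then have "c (Suc l) = c l \<or> c (Suc l) = Suc l"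
        using cp_pathsD(3)[OF c, of "Suc l"] Suc.prems by simp
      then show ?thesis using cp_pathsD(1)[OF c, of l] by auto
    qed
    ultimately show ?thesis by simp
  qed simp
qed simp

lemma cp_path_const_before:
  assumes c: "c \<in> cp_paths n" and l: "l \<le> n" and "c l = a" "1 \<le> a" "a \<le> l'" "l' \<le> l"
  shows "c l' = a"
  using assms(2-)
proof (induction l)
  case (Suc l)
  show ?case
  proof (cases "l' = Suc l")
    case False
    then have l'l: "l' \<le> l" using Suc by simp
    have "c (Suc l) = c l \<or> c (Suc l) = Suc l"
      using cp_pathsD(3)[OF c, of "Suc l"] Suc l'l by auto
    moreover have "c (Suc l) \<noteq> Suc l" using Suc l'l by auto
    ultimately show ?thesis using Suc l'l by simp
  qed (use Suc in simp)
qed simp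

lemma cp_path_const_run:
  assumes c: "c \<in> cp_paths n" and kb: "k \<le> b" and bn: "b \<le> n"
    and no_change: "\<And>l. k \<le> l \<Longrightarrow> l < b \<Longrightarrow> c (Suc l) \<noteq> Suc l"
  shows "c b = c k"
  using kb bn no_change
proof (induction b)
  case (Suc b)
  show ?case
  proof (cases "k = Suc b")
    case False
    then have kb: "k \<le> b" using Suc by simp
    have IH: "c b = c k" using Suc kb by simp
    have "c (Suc b) \<noteq> Suc b" using Suc.prems(3)[of b] kb by simp
    moreover have "c (Suc b) = c b \<or> c (Suc b) = Suc b"
      using cp_pathsD(3)[OF c, of "Suc b"] cp_pathsD(1)[OF c, of 1] cp_pathsD(2)[OF c, of 0] Suc.prems
      by (cases b) auto
    ultimately show ?thesis using IH by simp
  qed simp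
qed simp

lemma sets_cond_on [simp]: "sets (cond_on M A) = sets M"
  and space_cond_on [simp]: "space (cond_on M A) = space M"
  by (simp_all add: cond_on_def)

lemma emeasure_cond_on:
  assumes A: "A \<in> sets M" and S: "S \<in> sets M"
  shows "emeasure (cond_on M A) S = (if emeasure M A = 0 then 0 else emeasure M (A \<inter> S) / emeasure M A)"
proof (cases "emeasure M A = 0")
  case False
  have "emeasure (cond_on M A) S = (\<integral>\<^sup>+x. indicator A x / emeasure M A * indicator S x \<partial>M)"
    unfolding cond_on_def using False A S by (simp add: emeasure_density)
  also have "\<dots> = (\<integral>\<^sup>+x. indicator (A \<inter> S) x / emeasure M A \<partial>M)"
    by (rule nn_integral_cong) (auto simp: indicator_def)
  also have "\<dots> = emeasure M (A \<inter> S) / emeasure M A"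
    using A S by (simp add: nn_integral_divide)
  finally show ?thesis using False by simp
qed (simp add: cond_on_def)

lemma ennreal_divide_ratio:
  fixes x w z :: real
  assumes "0 \<le> x" "0 \<le> w" "0 < z"
  shows "(if ennreal (w / z) = 0 then 0 else ennreal (x / z) / ennreal (w / z)) = ennreal (x / w)"
proof (cases "w = 0")
  case False
  then have "w / z > 0" using assms by simp
  then show ?thesis using assms by (simp add: divide_ennreal)
qed simp

lemma integral_indicator_comp_scaled:
  fixes f :: "'b \<Rightarrow> 'c::{banach, second_countable_topology}"
  assumes A: "A \<in> sets M" and X: "X \<in> measurable M N" and r: "0 \<le> r" and sH: "sets H = sets N"
    and eq: "\<And>S. S \<in> sets N \<Longrightarrow> emeasure M (A \<inter> (X -` S \<inter> space M)) = ennreal r * emeasure H S"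
    and fi: "integrable H f" and fm: "f \<in> borel_measurable N"
  shows "integrable M (\<lambda>\<omega>. indicator A \<omega> *\<^sub>R f (X \<omega>))"
    "(\<integral>\<omega>. indicator A \<omega> *\<^sub>R f (X \<omega>) \<partial>M) = r *\<^sub>R (\<integral>x. f x \<partial>H)"
proof -
  define MA where "MA = density M (indicator A)"
  have XA: "X \<in> measurable MA N" using X by (simp add: MA_def)
  have fH: "f \<in> borel_measurable H" using fm measurable_cong_sets[OF sH refl] by blast
  have distr_eq: "distr MA N X = density H (\<lambda>_. ennreal r)"
  proof (rule measure_eqI)
    fix S assume "S \<in> sets (distr MA N X)"
    then have S: "S \<in> sets N" by simp
    have "emeasure (distr MA N X) S = emeasure M (A \<inter> (X -` S \<inter> space M))"
      using emeasure_distr[OF XA S] emeasure_restricted[OF A measurable_sets[OF X S]]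
      by (simp add: MA_def)
    also have "\<dots> = emeasure (density H (\<lambda>_. ennreal r)) S"
      using eq[OF S] S sH by (simp add: emeasure_density_const)
    finally show "emeasure (distr MA N X) S = emeasure (density H (\<lambda>_. ennreal r)) S" .
  qed (use sH in simp)
  have fX: "(\<lambda>\<omega>. f (X \<omega>)) \<in> borel_measurable M" using measurable_compose[OF X fm] .
  have ind: "(\<lambda>\<omega>. ennreal (indicator A \<omega>)) = indicator A" by (auto simp: fun_eq_iff indicator_def)
  have "integrable (density H (\<lambda>_. ennreal r)) f"
    using fi fH r by (subst integrable_density) auto
  then have "integrable MA (\<lambda>\<omega>. f (X \<omega>))"
    using distr_eq integrable_distr_eq[OF XA fm] by simp
  then show "integrable M (\<lambda>\<omega>. indicator A \<omega> *\<^sub>R f (X \<omega>))"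
    using integrable_density[OF fX, of "indicator A"] A by (simp add: MA_def ind)
  have "(\<integral>\<omega>. indicator A \<omega> *\<^sub>R f (X \<omega>) \<partial>M) = (\<integral>\<omega>. f (X \<omega>) \<partial>MA)"
    using integral_density[OF fX, of "indicator A"] A by (simp add: MA_def ind)
  also have "\<dots> = (\<integral>x. f x \<partial>density H (\<lambda>_. ennreal r))"
    using integral_distr[OF XA fm] distr_eq by simp
  also have "\<dots> = r *\<^sub>R (\<integral>x. f x \<partial>H)"
    using fH r by (subst integral_density) auto
  finally show "(\<integral>\<omega>. indicator A \<omega> *\<^sub>R f (X \<omega>) \<partial>M) = r *\<^sub>R (\<integral>x. f x \<partial>H)" .
qed

text \<open>Recombines \<open>c~ \<cdot> q~ \<cdot> H(S)\<close> into a joint posterior probability; the side conditions cover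
  the null events, on which the conditional probabilities are \<open>0\<close> because \<open>x / 0 = 0\<close>.\<close>

lemma ratio_chain_identity:
  fixes u \<alpha> \<beta> x t t' z :: real
  assumes "0 \<le> u" "0 \<le> \<alpha>" "\<alpha> \<le> \<beta>" "0 \<le> t" "u * \<beta> * t \<le> x * t" "t = 0 \<Longrightarrow> t' = 0"
  shows "u * \<alpha> * t' / z = u * \<beta> * t / (x * t) * (x * t' / z) * (\<alpha> / \<beta>)"
proof (cases "t = 0 \<or> u = 0 \<or> \<beta> = 0")
  case True
  then show ?thesis using assms by auto
next
  case False
  then have "u * \<beta> \<le> x" "0 < u * \<beta>" using assms by (auto simp: mult_le_cancel_right)
  then show ?thesis using False by (simp add: field_simps)
qed

lemma cp_path_segment_end:
  assumes c: "c \<in> cp_paths n" and k: "k \<in> {1..n}"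
  obtains e where "e \<in> {k..n}"
    "\<And>b a. b \<in> {k..n} \<Longrightarrow> a \<le> k \<Longrightarrow> (c b = a \<and> (b = n \<or> c (Suc b) = Suc b)) \<longleftrightarrow> (b = e \<and> a = c k)"
proof
  let ?end = "\<lambda>b. k \<le> b \<and> (b = n \<or> c (Suc b) = Suc b)"
  define e where "e = (LEAST b. ?end b)"
  have "?end n" using k by simp
  then have e: "?end e" "e \<le> n" unfolding e_def by (rule LeastI, rule Least_le)
  then show "e \<in> {k..n}" by simp
  have "c (Suc l) \<noteq> Suc l" if "k \<le> l" "l < e" for l
    using not_less_Least[of l ?end] that by (auto simp: e_def)
  then have ce: "c e = c k" using cp_path_const_run[OF c _ e(2)] e(1) by blast
  fix b a assume b: "b \<in> {k..n}" and a: "a \<le> k"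
  show "(c b = a \<and> (b = n \<or> c (Suc b) = Suc b)) \<longleftrightarrow> (b = e \<and> a = c k)"
  proof
    assume h: "c b = a \<and> (b = n \<or> c (Suc b) = Suc b)"
    have "e \<le> b" unfolding e_def by (rule Least_le) (use h b in auto)
    moreover have "\<not> e < b"
    proof
      assume "e < b"
      then have "c (Suc e) = Suc e" "c (Suc e) \<le> c b"
        using e b cp_path_mono[OF c, of b "Suc e"] by auto
      then show False using h a e by simp
    qed
    ultimately show "b = e \<and> a = c k" using h ce by simp
  qed (use e ce in auto)
qed

locale changepoint_model =
  fixes n :: nat and q :: "nat \<Rightarrow> nat \<Rightarrow> real" and J :: "'x measure" and \<psi> :: "'y measure"
    and p :: "'x \<Rightarrow> 'y \<Rightarrow> real" and y :: "nat \<Rightarrow> 'y"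
  assumes n_pos: "1 \<le> n" and J: "prob_space J" and trans_probs: "cp_trans_probs n q"
    and p_meas: "(\<lambda>(x, v). p x v) \<in> borel_measurable (J \<Otimes>\<^sub>M \<psi>)"
    and p_nonneg: "\<And>x v. x \<in> space J \<Longrightarrow> v \<in> space \<psi> \<Longrightarrow> 0 \<le> p x v"
    and y: "\<And>l. l \<in> {1..n} \<Longrightarrow> y l \<in> space \<psi>"
    and pos: "\<And>j k. 0 < j \<Longrightarrow> j \<le> k \<Longrightarrow> k \<le> n \<Longrightarrow> (\<integral>x. (\<Prod>l\<in>{j..k}. p x (y l)) \<partial>J) > 0"
begin

abbreviation "P \<equiv> cp_paths n"
abbreviation "V \<equiv> PiM {1..n} (\<lambda>_. J)"
abbreviation "W c \<equiv> ennreal (cp_weight q n c)"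
abbreviation "prior \<equiv> cp_prior q n J"
abbreviation "post m \<equiv> cp_post q n J p y m"

lemma p_y_measurable: "l \<in> {1..n} \<Longrightarrow> (\<lambda>x. p x (y l)) \<in> borel_measurable J"
  using measurable_compose[OF measurable_Pair[OF measurable_ident_sets[OF refl] measurable_const] p_meas]
    y by simp

lemma p_y_nonneg: "l \<in> {1..n} \<Longrightarrow> x \<in> space J \<Longrightarrow> 0 \<le> p x (y l)"
  using p_nonneg y by auto

definition segment :: "nat \<Rightarrow> (nat \<Rightarrow> nat) \<Rightarrow> nat \<Rightarrow> nat set" where
  "segment m c a = {l \<in> {1..m}. max (c l) 1 = a}"

definition segment_lik :: "nat \<Rightarrow> (nat \<Rightarrow> nat) \<Rightarrow> nat \<Rightarrow> ('x \<Rightarrow> ennreal) \<Rightarrow> nat \<Rightarrow> ennreal" where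
  "segment_lik m c a g k =
     (\<integral>\<^sup>+x. (if a = max (c k) 1 then g x else 1) * ennreal (\<Prod>l\<in>segment m c a. p x (y l)) \<partial>J)"

definition path_lik :: "nat \<Rightarrow> (nat \<Rightarrow> nat) \<Rightarrow> ('x \<Rightarrow> ennreal) \<Rightarrow> nat \<Rightarrow> ennreal" where
  "path_lik m c g k = (\<Prod>a\<in>{1..n}. segment_lik m c a g k)"

definition post_mass :: "nat \<Rightarrow> ((nat \<Rightarrow> nat) \<Rightarrow> bool) \<Rightarrow> ('x \<Rightarrow> ennreal) \<Rightarrow> nat \<Rightarrow> ennreal" where
  "post_mass m Q g k = (\<Sum>c\<in>P. W c * (if Q c then path_lik m c g k else 0))"

lemma segment_subset: "m \<le> n \<Longrightarrow> segment m c a \<subseteq> {1..n}"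
  by (auto simp: segment_def)

lemma segment_value_index:
  assumes "c \<in> P" "k \<in> {1..m}" "m \<le> n"
  shows "max (c k) 1 \<in> {1..n}"
  using cp_pathsD(1)[OF assms(1), of k] assms(2,3) by auto

lemma prod_segment_measurable: "m \<le> n \<Longrightarrow> (\<lambda>x. \<Prod>l\<in>segment m c a. p x (y l)) \<in> borel_measurable J"
  by (rule borel_measurable_prod) (use p_y_measurable segment_subset in blast)

lemma prod_lik_eq_prod_segments:
  assumes c: "c \<in> P" and m: "m \<le> n"
  shows "(\<Prod>l\<in>{1..m}. p (z (max (c l) 1)) (y l)) = (\<Prod>a\<in>{1..n}. \<Prod>l\<in>segment m c a. p (z a) (y l))"
proof -
  have "(\<Prod>l\<in>{1..m}. p (z (max (c l) 1)) (y l)) =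
        (\<Prod>a\<in>{1..n}. \<Prod>l\<in>{l \<in> {1..m}. max (c l) 1 = a}. p (z (max (c l) 1)) (y l))"
    by (rule prod.group[symmetric]) (use segment_value_index[OF c _ m] in auto)
  also have "\<dots> = (\<Prod>a\<in>{1..n}. \<Prod>l\<in>segment m c a. p (z a) (y l))"
    unfolding segment_def by (intro prod.cong refl) auto
  finally show ?thesis .
qed

lemma nn_integral_PiM_eq_path_lik:
  assumes c: "c \<in> P" and m: "m \<le> n" and k: "k \<in> {1..n}" and g: "g \<in> borel_measurable J"
  shows "(\<integral>\<^sup>+z. g (z (max (c k) 1)) * ennreal (\<Prod>l\<in>{1..m}. p (z (max (c l) 1)) (y l)) \<partial>V) = path_lik m c g k"
proof -
  interpret product_sigma_finite "\<lambda>_. J"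
    unfolding product_sigma_finite_def using prob_space_imp_sigma_finite[OF J] by simp
  have "g (z (max (c k) 1)) * ennreal (\<Prod>l\<in>{1..m}. p (z (max (c l) 1)) (y l)) =
     (\<Prod>a\<in>{1..n}. (if a = max (c k) 1 then g (z a) else 1) * ennreal (\<Prod>l\<in>segment m c a. p (z a) (y l)))"
    if z: "z \<in> space V" for z
  proof -
    have "z a \<in> space J" if "a \<in> {1..n}" for a
      using z that by (auto simp: space_PiM)
    then have "0 \<le> (\<Prod>l\<in>segment m c a. p (z a) (y l))" if "a \<in> {1..n}" for a
      using that p_y_nonneg segment_subset[OF m] by (meson prod_nonneg subsetD)
    then have "ennreal (\<Prod>l\<in>{1..m}. p (z (max (c l) 1)) (y l)) =
        (\<Prod>a\<in>{1..n}. ennreal (\<Prod>l\<in>segment m c a. p (z a) (y l)))"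
      unfolding prod_lik_eq_prod_segments[OF c m] by (rule prod_ennreal[symmetric])
    moreover have "g (z (max (c k) 1)) = (\<Prod>a\<in>{1..n}. (if a = max (c k) 1 then g (z a) else 1))"
      using segment_value_index[OF c k order_refl] by simp
    ultimately show ?thesis by (simp add: prod.distrib)
  qed
  then have "(\<integral>\<^sup>+z. g (z (max (c k) 1)) * ennreal (\<Prod>l\<in>{1..m}. p (z (max (c l) 1)) (y l)) \<partial>V) =
      (\<integral>\<^sup>+z. (\<Prod>a\<in>{1..n}. (if a = max (c k) 1 then g (z a) else 1) *
                ennreal (\<Prod>l\<in>segment m c a. p (z a) (y l))) \<partial>V)"
    by (rule nn_integral_cong)
  also have "\<dots> = path_lik m c g k"
    unfolding path_lik_def segment_lik_def
    by (rule product_nn_integral_prod) (use g prod_segment_measurable[OF m] in auto)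
  finally show ?thesis .
qed

lemma space_prior: "space prior = P \<times> space V"
  unfolding cp_prior_def by (simp add: space_pair_measure space_point_measure)

lemma fst_measurable_prior: "fst \<in> measurable prior (count_space P)"
proof -
  have "fst \<in> measurable prior (point_measure P (\<lambda>c. W c))"
    unfolding cp_prior_def by (rule measurable_fst)
  moreover have "sets (point_measure P (\<lambda>c. W c)) = sets (count_space P)"
    by (simp add: sets_point_measure)
  ultimately show ?thesis
    using measurable_cong_sets[of prior prior "point_measure P (\<lambda>c. W c)" "count_space P"] by simp
qed

lemma snd_measurable_prior: "snd \<in> measurable prior V"
  unfolding cp_prior_def by (rule measurable_snd)

lemma measurable_prior_by_path:
  assumes "\<And>c. c \<in> P \<Longrightarrow> (\<lambda>z. F c z) \<in> measurable V N"
  shows "(\<lambda>\<omega>. F (fst \<omega>) (snd \<omega>)) \<in> measurable prior N"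
  by (rule measurable_compose_countable'[OF measurable_compose[OF snd_measurable_prior assms] fst_measurable_prior])
     (simp_all add: finite_cp_paths countable_finite)

lemma cp_X_measurable:
  assumes k: "k \<in> {1..n}"
  shows "cp_X k \<in> measurable prior J"
proof -
  have "(\<lambda>\<omega>. snd \<omega> (max (fst \<omega> k) 1)) \<in> measurable prior J"
  proof (rule measurable_prior_by_path[where F = "\<lambda>c z. z (max (c k) 1)"])
    fix c assume "c \<in> P"
    then show "(\<lambda>z. z (max (c k) 1)) \<in> measurable V J"
      by (intro measurable_component_singleton segment_value_index[OF _ k order_refl])
  qed
  then show ?thesis by (simp add: cp_X_def[abs_def])
qed

lemma cp_lik_measurable:
  assumes "m \<le> n"
  shows "(\<lambda>\<omega>. ennreal (cp_lik p y m \<omega>)) \<in> borel_measurable prior"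
proof -
  have "(\<lambda>\<omega>. \<Prod>l\<in>{1..m}. p (cp_X l \<omega>) (y l)) \<in> borel_measurable prior"
  proof (rule borel_measurable_prod)
    fix l assume "l \<in> {1..m}"
    then have l: "l \<in> {1..n}" using assms by auto
    show "(\<lambda>\<omega>. p (cp_X l \<omega>) (y l)) \<in> borel_measurable prior"
      using measurable_compose[OF cp_X_measurable[OF l] p_y_measurable[OF l]] .
  qed
  then show ?thesis unfolding cp_lik_def by simp
qed

lemma event_measurable:
  "{\<omega> \<in> space prior. Q (fst \<omega>)} \<in> sets prior"
proof -
  have "fst -` {c \<in> P. Q c} \<inter> space prior \<in> sets prior"
    by (rule measurable_sets[OF fst_measurable_prior]) simp
  moreover have "fst -` {c \<in> P. Q c} \<inter> space prior = {\<omega> \<in> space prior. Q (fst \<omega>)}"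
    by (auto simp: space_prior)
  ultimately show ?thesis by simp
qed

lemma event_integrand_measurable:
  assumes m: "m \<le> n" and k: "k \<in> {1..n}" and g: "g \<in> borel_measurable J"
  shows "(\<lambda>\<omega>. (if Q (fst \<omega>) then g (cp_X k \<omega>) else 0) * ennreal (cp_lik p y m \<omega>)) \<in> borel_measurable prior"
proof -
  have "Measurable.pred prior (\<lambda>\<omega>. Q (fst \<omega>))"
    using event_measurable unfolding pred_def by simp
  then show ?thesis
    using cp_lik_measurable[OF m] measurable_compose[OF cp_X_measurable[OF k] g] by measurable
qed

lemma nn_integral_prior_eq_post_mass:
  assumes m: "m \<le> n" and k: "k \<in> {1..n}" and g: "g \<in> borel_measurable J"
  shows "(\<integral>\<^sup>+\<omega>. (if Q (fst \<omega>) then g (cp_X k \<omega>) else 0) * ennreal (cp_lik p y m \<omega>) \<partial>prior) =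
    post_mass m Q g k"
proof -
  interpret V: prob_space V by (rule prob_space_PiM) (simp add: J)
  let ?F = "\<lambda>\<omega>. (if Q (fst \<omega>) then g (cp_X k \<omega>) else 0) * ennreal (cp_lik p y m \<omega>)"
  have "integral\<^sup>N prior ?F = (\<integral>\<^sup>+c. \<integral>\<^sup>+z. ?F (c, z) \<partial>V \<partial>point_measure P (\<lambda>c. W c))"
    unfolding cp_prior_def
    by (rule V.nn_integral_fst[symmetric]) (use event_integrand_measurable[OF m k g] in \<open>simp add: cp_prior_def\<close>)
  also have "\<dots> = (\<Sum>c\<in>P. W c * (\<integral>\<^sup>+z. ?F (c, z) \<partial>V))"
    by (rule nn_integral_point_measure_finite) (rule finite_cp_paths)
  also have "\<dots> = post_mass m Q g k"
    unfolding post_mass_def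
  proof (intro sum.cong refl)
    fix c assume c: "c \<in> P"
    show "W c * (\<integral>\<^sup>+z. ?F (c, z) \<partial>V) = W c * (if Q c then path_lik m c g k else 0)"
      using nn_integral_PiM_eq_path_lik[OF c m k g] by (simp add: cp_X_def cp_lik_def)
  qed
  finally show ?thesis .
qed

lemma segment_eq_atLeastAtMost:
  assumes c: "c \<in> P" and m: "m \<le> n" and ne: "segment m c a \<noteq> {}"
  shows "segment m c a = {a..Max (segment m c a)}" "1 \<le> a" "Max (segment m c a) \<le> m"
proof -
  define e where "e = Max (segment m c a)"
  have fin: "finite (segment m c a)" by (simp add: segment_def)
  then have "e \<in> segment m c a" unfolding e_def using ne by (rule Max_in)
  then have e: "e \<in> {1..m}" "max (c e) 1 = a" by (auto simp: segment_def)
  show a1: "1 \<le> a" using e by auto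
  show "Max (segment m c a) \<le> m" using e e_def by simp
  have inside: "a \<le> l \<and> l \<le> e" if l: "l \<in> segment m c a" for l
  proof
    show "a \<le> l" using l cp_pathsD(1)[OF c, of l] by (auto simp: segment_def)
    show "l \<le> e" unfolding e_def using fin l by (rule Max_ge)
  qed
  have between: "l \<in> segment m c a" if l: "a \<le> l" "l \<le> e" for l
  proof -
    have l1: "l \<in> {1..m}" using l a1 e by auto
    show ?thesis
    proof (cases "a = 1")
      case True
      have "c l \<le> c e" using cp_path_mono[OF c _ l(2)] e m by simp
      then show ?thesis using l1 e True by (simp add: segment_def)
    next
      case False
      then have "c e = a" using e by auto
      then have "c l = a" using cp_path_const_before[OF c _ _ a1 l] e m by simp
      then show ?thesis using l1 a1 by (simp add: segment_def)
    qed
  qed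
  show "segment m c a = {a..Max (segment m c a)}"
    unfolding e_def[symmetric] by (auto dest: inside intro: between)
qed

definition segment_evidence :: "nat \<Rightarrow> (nat \<Rightarrow> nat) \<Rightarrow> nat \<Rightarrow> ennreal" where
  "segment_evidence m c a = (\<integral>\<^sup>+x. ennreal (\<Prod>l\<in>segment m c a. p x (y l)) \<partial>J)"

lemma segment_evidence_pos_finite:
  assumes c: "c \<in> P" and m: "m \<le> n"
  shows "segment_evidence m c a \<noteq> 0 \<and> segment_evidence m c a < \<top>"
proof (cases "segment m c a = {}")
  case True
  then show ?thesis using prob_space.emeasure_space_1[OF J] by (simp add: segment_evidence_def)
next
  case False
  note interval = segment_eq_atLeastAtMost[OF c m False]
  define e where "e = Max (segment m c a)"
  have ae: "a \<le> e" using interval(1) False e_def by auto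
  have I: "(\<integral>x. (\<Prod>l\<in>{a..e}. p x (y l)) \<partial>J) > 0"
    using pos[of a e] interval ae m e_def by auto
  then have int: "integrable J (\<lambda>x. \<Prod>l\<in>{a..e}. p x (y l))"
    using not_integrable_integral_eq by fastforce
  have "AE x in J. 0 \<le> (\<Prod>l\<in>{a..e}. p x (y l))"
    using interval(2,3) m e_def by (intro AE_I2 prod_nonneg p_y_nonneg) auto
  then have "segment_evidence m c a = ennreal (\<integral>x. (\<Prod>l\<in>{a..e}. p x (y l)) \<partial>J)"
    unfolding segment_evidence_def using interval(1) e_def nn_integral_eq_integral[OF int] by simp
  then show ?thesis using I by simp
qed

lemma path_lik_const: "path_lik m c (\<lambda>_. 1) k = (\<Prod>a\<in>{1..n}. segment_evidence m c a)"
  unfolding path_lik_def segment_lik_def segment_evidence_def by simp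

lemma path_lik_const_pos_finite:
  assumes c: "c \<in> P" and m: "m \<le> n"
  shows "path_lik m c (\<lambda>_. 1) k \<noteq> 0" "path_lik m c (\<lambda>_. 1) k < \<top>"
proof -
  have "segment_evidence m c a \<noteq> 0" "segment_evidence m c a \<noteq> \<top>" for a
    using segment_evidence_pos_finite[OF c m, of a] by auto
  then show "path_lik m c (\<lambda>_. 1) k \<noteq> 0" "path_lik m c (\<lambda>_. 1) k < \<top>"
    unfolding path_lik_const top.not_eq_extremum[symmetric] by (auto simp: ennreal_prod_eq_top)
qed

lemma path_lik_le:
  assumes g: "\<And>x. x \<in> space J \<Longrightarrow> g x \<le> 1"
  shows "path_lik m c g k \<le> path_lik m c (\<lambda>_. 1) k"
  unfolding path_lik_def
proof (rule prod_mono_ennreal)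
  fix a show "segment_lik m c a g k \<le> segment_lik m c a (\<lambda>_. 1) k"
    unfolding segment_lik_def
  proof (rule nn_integral_mono)
    fix x assume "x \<in> space J"
    then have "g x * e \<le> e" for e :: ennreal
      using mult_right_mono[OF g, of x e] by simp
    then show "(if a = max (c k) 1 then g x else 1) * ennreal (\<Prod>l\<in>segment m c a. p x (y l))
        \<le> (if a = max (c k) 1 then 1 else 1) * ennreal (\<Prod>l\<in>segment m c a. p x (y l))"
      by simp
  qed
qed

lemma post_mass_mono:
  assumes "\<And>c. c \<in> P \<Longrightarrow> Q c \<Longrightarrow> Q' c" "\<And>c. c \<in> P \<Longrightarrow> path_lik m c g k \<le> path_lik m c g' k'"
  shows "post_mass m Q g k \<le> post_mass m Q' g' k'"
  unfolding post_mass_def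
  by (rule sum_mono) (use assms in \<open>auto intro!: mult_left_mono\<close>)

lemma post_mass_finite:
  assumes m: "m \<le> n" and g: "\<And>x. x \<in> space J \<Longrightarrow> g x \<le> 1"
  shows "post_mass m Q g k < \<top>"
  unfolding post_mass_def ennreal_sum_less_top[OF finite_cp_paths]
proof
  fix c assume c: "c \<in> P"
  have "path_lik m c g k < \<top>"
    using path_lik_le[OF g] path_lik_const_pos_finite(2)[OF c m] by (rule le_less_trans)
  then show "W c * (if Q c then path_lik m c g k else 0) < \<top>"
    by (simp add: ennreal_mult_less_top)
qed

lemma post_mass_const_indep: "post_mass m Q (\<lambda>_. 1) k = post_mass m Q (\<lambda>_. 1) k'"
  unfolding post_mass_def path_lik_const ..

lemma path_lik_cong:
  assumes "\<And>l. l \<le> m \<Longrightarrow> c l = c' l" "k \<le> m"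
  shows "path_lik m c g k = path_lik m c' g k"
proof -
  have "segment m c a = segment m c' a" for a using assms(1) by (auto simp: segment_def)
  moreover have "c k = c' k" using assms by simp
  ultimately show ?thesis unfolding path_lik_def segment_lik_def by simp
qed

lemma post_mass_marginal:
  assumes "m \<le> m'" "m' \<le> n" "k \<le> m"
    and Q: "\<And>c c'. (\<And>l. l \<le> m' \<Longrightarrow> c l = c' l) \<Longrightarrow> Q c = Q c'"
  shows "post_mass m Q g k =
    (\<Sum>c\<in>cp_paths m'. ennreal (cp_weight q m' c) * (if Q c then path_lik m c g k else 0))"
  unfolding post_mass_def
proof (rule sum_cp_weight_marginal[OF trans_probs \<open>m' \<le> n\<close>])
  fix c c' :: "nat \<Rightarrow> nat" assume h: "\<And>l. l \<le> m' \<Longrightarrow> c l = c' l"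
  have "path_lik m c g k = path_lik m c' g k" by (rule path_lik_cong) (use h assms in auto)
  then show "(if Q c then path_lik m c g k else 0) = (if Q c' then path_lik m c' g k else 0)"
    using Q[OF h] by simp
qed

context
  fixes b :: nat
  assumes b1: "1 \<le> b" and bn: "b < n"
begin

definition renewal_paths :: "(nat \<Rightarrow> nat) set" where
  "renewal_paths = {c \<in> P. c (Suc b) = Suc b}"

definition head_path :: "(nat \<Rightarrow> nat) \<Rightarrow> nat \<Rightarrow> nat" where
  "head_path c = (\<lambda>k. if k \<le> b then c k else 0)"

definition tail_path :: "(nat \<Rightarrow> nat) \<Rightarrow> nat \<Rightarrow> nat" where
  "tail_path c = (\<lambda>k. if k \<le> b then 0 else c k)"

definition join_paths :: "(nat \<Rightarrow> nat) \<Rightarrow> (nat \<Rightarrow> nat) \<Rightarrow> nat \<Rightarrow> nat" where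
  "join_paths h t = (\<lambda>k. if k \<le> b then h k else t k)"

definition tails :: "(nat \<Rightarrow> nat) set" where
  "tails = tail_path ` renewal_paths"

definition tail_weight :: "(nat \<Rightarrow> nat) \<Rightarrow> ennreal" where
  "tail_weight t = ennreal (\<Prod>i\<in>{Suc (Suc b)..n}. cp_trans q t i)"

definition tail_evidence :: "(nat \<Rightarrow> nat) \<Rightarrow> ennreal" where
  "tail_evidence t = (\<Prod>a\<in>{Suc b..n}. segment_evidence n t a)"

lemma finite_tails: "finite tails"
  unfolding tails_def renewal_paths_def using finite_cp_paths by simp

lemma tails_zero: "t \<in> tails \<Longrightarrow> k \<le> b \<Longrightarrow> t k = 0"
  unfolding tails_def tail_path_def by auto

lemma join_mem_renewal_paths:
  assumes h: "h \<in> cp_paths b" and t: "t \<in> tails"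
  shows "join_paths h t \<in> renewal_paths"
proof -
  obtain c where c: "c \<in> P" "c (Suc b) = Suc b" and t_eq: "t = tail_path c"
    using t unfolding tails_def renewal_paths_def by auto
  have jk: "join_paths h t k = (if k \<le> b then h k else c k)" for k
    by (simp add: join_paths_def t_eq tail_path_def)
  have "join_paths h t k = join_paths h t (k - 1) \<or> join_paths h t k = k" if k: "k \<in> {2..n}" for k
  proof (cases "k \<le> b")
    case True
    then show ?thesis using cp_pathsD(3)[OF h, of k] k by (auto simp: jk)
  next
    case False
    then show ?thesis
      using cp_pathsD(3)[OF c(1), of k] k c(2) by (cases "k = Suc b") (auto simp: jk)
  qed
  moreover have "join_paths h t k \<le> k" "k \<notin> {1..n} \<Longrightarrow> join_paths h t k = 0" for k
    using cp_pathsD(1,2)[OF h, of k] cp_pathsD(1,2)[OF c(1), of k] bn by (auto simp: jk)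
  ultimately show ?thesis
    using c(2) unfolding renewal_paths_def cp_paths_def by (auto simp: jk)
qed

lemma bij_betw_join_paths: "bij_betw (\<lambda>(h, t). join_paths h t) (cp_paths b \<times> tails) renewal_paths"
proof (rule bij_betw_byWitness[where f' = "\<lambda>c. (head_path c, tail_path c)"])
  show "\<forall>x\<in>cp_paths b \<times> tails.
      (head_path ((\<lambda>(h, t). join_paths h t) x), tail_path ((\<lambda>(h, t). join_paths h t) x)) = x"
    using cp_pathsD(2) tails_zero by (fastforce simp: head_path_def tail_path_def join_paths_def)
  show "\<forall>c\<in>renewal_paths. (\<lambda>(h, t). join_paths h t) (head_path c, tail_path c) = c"
    by (auto simp: head_path_def tail_path_def join_paths_def)
  show "(\<lambda>(h, t). join_paths h t) ` (cp_paths b \<times> tails) \<subseteq> renewal_paths"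
    using join_mem_renewal_paths by auto
  have "head_path c \<in> cp_paths b" if "c \<in> P" for c
    using that bn unfolding head_path_def cp_paths_def by (auto dest: cp_pathsD)
  then show "(\<lambda>c. (head_path c, tail_path c)) ` renewal_paths \<subseteq> cp_paths b \<times> tails"
    by (auto simp: renewal_paths_def tails_def)
qed

lemma prod_split_at_renewal: "prod f {1..n} = prod f {1..b} * prod f {Suc b..n}"
proof -
  have "{1..n} = {1..b} \<union> {Suc b..n}" using bn by auto
  then show ?thesis by (simp add: prod.union_disjoint)
qed

lemma cp_weight_join_paths:
  assumes h: "h \<in> cp_paths b" and t: "t \<in> tails"
  shows "W (join_paths h t) = ennreal (cp_weight q b h) * ennreal (1 - q (h b) (Suc b)) * tail_weight t"
proof -
  let ?c = "join_paths h t"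
  have cP: "?c \<in> P" and cb: "?c (Suc b) = Suc b"
    using join_mem_renewal_paths[OF h t] by (auto simp: renewal_paths_def)
  have "cp_weight q n ?c = (\<Prod>i\<in>{1..b}. cp_trans q ?c i) * (\<Prod>i\<in>{Suc b..n}. cp_trans q ?c i)"
    using cp_weight_eq_prod_cp_trans[OF cP] prod_split_at_renewal by simp
  also have "(\<Prod>i\<in>{1..b}. cp_trans q ?c i) = cp_weight q b h"
    unfolding cp_weight_eq_prod_cp_trans[OF h] by (rule prod.cong) (auto simp: cp_trans_def join_paths_def)
  also have "(\<Prod>i\<in>{Suc b..n}. cp_trans q ?c i) = cp_trans q ?c (Suc b) * (\<Prod>i\<in>{Suc (Suc b)..n}. cp_trans q ?c i)"
    using bn by (subst atLeastAtMost_insertL[symmetric]) auto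
  also have "cp_trans q ?c (Suc b) = 1 - q (h b) (Suc b)"
    using cb by (simp add: cp_trans_def join_paths_def)
  also have "(\<Prod>i\<in>{Suc (Suc b)..n}. cp_trans q ?c i) = (\<Prod>i\<in>{Suc (Suc b)..n}. cp_trans q t i)"
    by (rule prod.cong) (auto simp: cp_trans_def join_paths_def)
  finally have w: "cp_weight q n ?c =
      cp_weight q b h * (1 - q (h b) (Suc b)) * (\<Prod>i\<in>{Suc (Suc b)..n}. cp_trans q t i)"
    by (simp add: mult_ac)
  have "0 \<le> cp_weight q b h"
    using cp_weight_nonneg[OF cp_trans_probs_mono[OF trans_probs] h] bn by simp
  moreover have "0 \<le> 1 - q (h b) (Suc b)"
    using trans_probs cp_pathsD(1)[OF h, of b] bn unfolding cp_trans_probs_def by auto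
  moreover have "0 \<le> (\<Prod>i\<in>{Suc (Suc b)..n}. cp_trans q t i)"
  proof (rule prod_nonneg)
    fix i assume i: "i \<in> {Suc (Suc b)..n}"
    then have "cp_trans q t i = cp_trans q ?c i" by (auto simp: cp_trans_def join_paths_def)
    then show "0 \<le> cp_trans q t i" using cp_trans_nonneg[OF trans_probs cP, of i] i by auto
  qed
  ultimately show ?thesis unfolding w tail_weight_def by (simp add: ennreal_mult)
qed

lemma segment_renewal:
  assumes c: "c \<in> renewal_paths"
  shows "a \<in> {1..b} \<Longrightarrow> segment n c a = segment b c a"
    and "a \<in> {Suc b..n} \<Longrightarrow> segment b c a = {}"
proof -
  have cP: "c \<in> P" and cb: "c (Suc b) = Suc b" using c by (auto simp: renewal_paths_def)
  show "segment n c a = segment b c a" if a: "a \<in> {1..b}"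
  proof -
    have "l \<le> b" if "l \<in> {1..n}" "max (c l) 1 = a" for l
      using cp_path_mono[OF cP, of l "Suc b"] that cb a by (cases "l \<le> b") auto
    then show ?thesis unfolding segment_def using bn by auto
  qed
  show "segment b c a = {}" if a: "a \<in> {Suc b..n}"
  proof -
    have "max (c l) 1 \<le> b" if "l \<in> {1..b}" for l using cp_pathsD(1)[OF cP, of l] that by auto
    then show ?thesis using a unfolding segment_def by force
  qed
qed

lemma path_lik_renewal:
  assumes c: "c \<in> renewal_paths"
  shows "path_lik n c g b = path_lik b c g b * tail_evidence c"
proof -
  have "c b \<le> b" using c cp_pathsD(1) by (auto simp: renewal_paths_def)
  then have cbb: "max (c b) 1 \<le> b" using b1 by simp
  have "path_lik n c g b = (\<Prod>a\<in>{1..b}. segment_lik n c a g b) * (\<Prod>a\<in>{Suc b..n}. segment_lik n c a g b)"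
    unfolding path_lik_def by (rule prod_split_at_renewal)
  also have "(\<Prod>a\<in>{1..b}. segment_lik n c a g b) = (\<Prod>a\<in>{1..b}. segment_lik b c a g b)"
    by (rule prod.cong) (auto simp: segment_lik_def segment_renewal(1)[OF c])
  also have "(\<Prod>a\<in>{Suc b..n}. segment_lik n c a g b) = tail_evidence c"
    unfolding tail_evidence_def
  proof (rule prod.cong[OF refl])
    fix a assume "a \<in> {Suc b..n}"
    then have "a \<noteq> max (c b) 1" using cbb by auto
    then show "segment_lik n c a g b = segment_evidence n c a"
      by (simp add: segment_lik_def segment_evidence_def)
  qed
  also have "(\<Prod>a\<in>{1..b}. segment_lik b c a g b) = path_lik b c g b"
  proof -
    have "segment_lik b c a g b = 1" if a: "a \<in> {Suc b..n}" for a
    proof -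
      have "a \<noteq> max (c b) 1" using a cbb by auto
      then show ?thesis
        using segment_renewal(2)[OF c a] prob_space.emeasure_space_1[OF J] by (simp add: segment_lik_def)
    qed
    then show ?thesis
      unfolding path_lik_def prod_split_at_renewal[of "\<lambda>a. segment_lik b c a g b"] by simp
  qed
  finally show ?thesis .
qed

lemma tail_evidence_join_paths:
  assumes h: "h \<in> cp_paths b" and t: "t \<in> tails"
  shows "tail_evidence (join_paths h t) = tail_evidence t"
proof -
  have "segment n (join_paths h t) a = segment n t a" if a: "a \<in> {Suc b..n}" for a
  proof -
    have "max (join_paths h t l) 1 \<noteq> a \<and> max (t l) 1 \<noteq> a" if "l \<le> b" for l
      using that a cp_pathsD(1)[OF h, of l] tails_zero[OF t that] b1 by (auto simp: join_paths_def)
    then show ?thesis unfolding segment_def join_paths_def by (auto split: if_splits)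
  qed
  then show ?thesis unfolding tail_evidence_def segment_evidence_def by (intro prod.cong) auto
qed

lemma sum_renewal_paths:
  fixes X :: "(nat \<Rightarrow> nat) \<Rightarrow> ennreal"
  assumes Q: "\<And>c c'. (\<And>l. l \<le> b \<Longrightarrow> c l = c' l) \<Longrightarrow> Q c = Q c'"
  shows "(\<Sum>c\<in>P. W c * (if c (Suc b) = Suc b \<and> Q c then X c else 0)) =
    (\<Sum>h\<in>cp_paths b. \<Sum>t\<in>tails. ennreal (cp_weight q b h) * ennreal (1 - q (h b) (Suc b)) *
        tail_weight t * (if Q h then X (join_paths h t) else 0))"
proof -
  have "(\<Sum>c\<in>P. W c * (if c (Suc b) = Suc b \<and> Q c then X c else 0)) =
      (\<Sum>c\<in>renewal_paths. W c * (if Q c then X c else 0))"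
    unfolding renewal_paths_def by (subst sum.inter_filter[OF finite_cp_paths]) (auto intro!: sum.cong)
  also have "\<dots> = (\<Sum>(h, t)\<in>cp_paths b \<times> tails. W (join_paths h t) * (if Q (join_paths h t) then X (join_paths h t) else 0))"
    unfolding sum.reindex_bij_betw[OF bij_betw_join_paths, of "\<lambda>c. W c * (if Q c then X c else 0)", symmetric]
    by (intro sum.cong refl) (auto split: prod.splits)
  also have "\<dots> = (\<Sum>h\<in>cp_paths b. \<Sum>t\<in>tails. W (join_paths h t) * (if Q (join_paths h t) then X (join_paths h t) else 0))"
    by (rule sum.cartesian_product[symmetric])
  also have "\<dots> = (\<Sum>h\<in>cp_paths b. \<Sum>t\<in>tails. ennreal (cp_weight q b h) * ennreal (1 - q (h b) (Suc b)) *
        tail_weight t * (if Q h then X (join_paths h t) else 0))"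
  proof (intro sum.cong refl)
    fix h t assume "h \<in> cp_paths b" "t \<in> tails"
    moreover have "Q (join_paths h t) = Q h" by (rule Q) (simp add: join_paths_def)
    ultimately show "W (join_paths h t) * (if Q (join_paths h t) then X (join_paths h t) else 0) =
      ennreal (cp_weight q b h) * ennreal (1 - q (h b) (Suc b)) * tail_weight t * (if Q h then X (join_paths h t) else 0)"
      using cp_weight_join_paths by simp
  qed
  finally show ?thesis .
qed

definition head_mass :: "((nat \<Rightarrow> nat) \<Rightarrow> bool) \<Rightarrow> ('x \<Rightarrow> ennreal) \<Rightarrow> ennreal" where
  "head_mass Q g = (\<Sum>h\<in>cp_paths b. ennreal (cp_weight q b h) * ennreal (1 - q (h b) (Suc b)) *
      (if Q h then path_lik b h g b else 0))"

text \<open>Markov property at a change point: given \<open>C\<^sub>b\<^sub>+\<^sub>1 = b + 1\<close>, the path and data up to time \<open>b\<close>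
  decouple from the rest, so both posterior masses factor through the same head mass.\<close>

lemma post_mass_renewal:
  assumes Q: "\<And>c c'. (\<And>l. l \<le> b \<Longrightarrow> c l = c' l) \<Longrightarrow> Q c = Q c'"
  shows "post_mass n (\<lambda>c. c (Suc b) = Suc b \<and> Q c) g b = head_mass Q g * (\<Sum>t\<in>tails. tail_weight t * tail_evidence t)"
    "post_mass b (\<lambda>c. c (Suc b) = Suc b \<and> Q c) g b = head_mass Q g * (\<Sum>t\<in>tails. tail_weight t)"
proof -
  let ?w = "\<lambda>h. ennreal (cp_weight q b h) * ennreal (1 - q (h b) (Suc b))"
  have head_lik: "path_lik b (join_paths h t) g b = path_lik b h g b" for h t
    by (rule path_lik_cong) (auto simp: join_paths_def)
  have full: "path_lik n (join_paths h t) g b = path_lik b h g b * tail_evidence t"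
    if "h \<in> cp_paths b" "t \<in> tails" for h t
    using path_lik_renewal[OF join_mem_renewal_paths[OF that]] tail_evidence_join_paths[OF that] head_lik by simp
  have "post_mass n (\<lambda>c. c (Suc b) = Suc b \<and> Q c) g b =
      (\<Sum>h\<in>cp_paths b. \<Sum>t\<in>tails. ?w h * tail_weight t * (if Q h then path_lik n (join_paths h t) g b else 0))"
    unfolding post_mass_def by (rule sum_renewal_paths[OF Q])
  also have "\<dots> = (\<Sum>h\<in>cp_paths b. \<Sum>t\<in>tails. (?w h * (if Q h then path_lik b h g b else 0)) *
      (tail_weight t * tail_evidence t))"
    by (intro sum.cong refl) (simp add: full mult_ac)
  finally show "post_mass n (\<lambda>c. c (Suc b) = Suc b \<and> Q c) g b =
      head_mass Q g * (\<Sum>t\<in>tails. tail_weight t * tail_evidence t)"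
    unfolding head_mass_def sum_product .
  have "post_mass b (\<lambda>c. c (Suc b) = Suc b \<and> Q c) g b =
      (\<Sum>h\<in>cp_paths b. \<Sum>t\<in>tails. ?w h * tail_weight t * (if Q h then path_lik b (join_paths h t) g b else 0))"
    unfolding post_mass_def by (rule sum_renewal_paths[OF Q])
  also have "\<dots> = (\<Sum>h\<in>cp_paths b. \<Sum>t\<in>tails. (?w h * (if Q h then path_lik b h g b else 0)) * tail_weight t)"
    by (intro sum.cong refl) (simp add: head_lik mult_ac)
  finally show "post_mass b (\<lambda>c. c (Suc b) = Suc b \<and> Q c) g b = head_mass Q g * (\<Sum>t\<in>tails. tail_weight t)"
    unfolding head_mass_def sum_product .
qed

lemma head_mass_at:
  "head_mass (\<lambda>c. c b = a) g = ennreal (1 - q a (Suc b)) * post_mass b (\<lambda>c. c b = a) g b"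
proof -
  have "head_mass (\<lambda>c. c b = a) g = (\<Sum>h\<in>cp_paths b. ennreal (1 - q a (Suc b)) *
      (ennreal (cp_weight q b h) * (if h b = a then path_lik b h g b else 0)))"
    unfolding head_mass_def by (intro sum.cong refl) (simp add: mult_ac)
  also have "\<dots> = ennreal (1 - q a (Suc b)) * post_mass b (\<lambda>c. c b = a) g b"
    using bn by (subst post_mass_marginal[of b b]) (auto simp: sum_distrib_left)
  finally show ?thesis .
qed

lemma enn2real_sum_tail_weight_eq_0:
  assumes "enn2real (\<Sum>t\<in>tails. tail_weight t) = 0"
  shows "enn2real (\<Sum>t\<in>tails. tail_weight t * tail_evidence t) = 0"
proof -
  have "(\<Sum>t\<in>tails. tail_weight t) < \<top>"
    using finite_tails by (simp add: tail_weight_def)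
  then have "\<forall>t\<in>tails. tail_weight t = 0"
    using assms finite_tails by (auto simp: enn2real_eq_0_iff sum_eq_0_iff)
  then show ?thesis by (simp add: sum.neutral)
qed

end

definition evidence :: "nat \<Rightarrow> ennreal" where
  "evidence m = post_mass m (\<lambda>_. True) (\<lambda>_. 1) 1"

definition post_mass_real :: "nat \<Rightarrow> ((nat \<Rightarrow> nat) \<Rightarrow> bool) \<Rightarrow> ('x \<Rightarrow> ennreal) \<Rightarrow> nat \<Rightarrow> real" where
  "post_mass_real m Q g k = enn2real (post_mass m Q g k)"

definition evidence_real :: "nat \<Rightarrow> real" where
  "evidence_real m = enn2real (evidence m)"

lemma nn_integral_cp_lik: "m \<le> n \<Longrightarrow> (\<integral>\<^sup>+\<omega>. ennreal (cp_lik p y m \<omega>) \<partial>prior) = evidence m"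
  using nn_integral_prior_eq_post_mass[of m 1 "\<lambda>_. 1" "\<lambda>_. True"] n_pos unfolding evidence_def by simp

lemma sum_cp_weight: "(\<Sum>c\<in>P. W c) = 1"
proof -
  have "(\<Sum>c\<in>P. W c * 1) = (\<Sum>c\<in>cp_paths 0. ennreal (cp_weight q 0 c) * 1)"
    by (rule sum_cp_weight_marginal[OF trans_probs]) auto
  then show ?thesis by (simp add: cp_paths_0 cp_weight_def)
qed

lemma evidence_pos_finite:
  assumes m: "m \<le> n"
  shows "evidence m \<noteq> 0" "evidence m < \<top>"
proof -
  show "evidence m < \<top>" unfolding evidence_def by (rule post_mass_finite[OF m]) simp
  obtain c where c: "c \<in> P" "W c \<noteq> 0" using sum_cp_weight by (metis sum.neutral zero_neq_one)
  then have "W c * path_lik m c (\<lambda>_. 1) 1 \<noteq> 0" using path_lik_const_pos_finite(1)[OF c(1) m] by simp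
  then show "evidence m \<noteq> 0"
    unfolding evidence_def post_mass_def using c(1) finite_cp_paths by (auto simp: sum_eq_0_iff)
qed

lemma post_mass_real_nonneg: "0 \<le> post_mass_real m Q g k"
  by (simp add: post_mass_real_def)

lemma post_mass_eq_ennreal:
  assumes "m \<le> n" "\<And>x. x \<in> space J \<Longrightarrow> g x \<le> 1"
  shows "post_mass m Q g k = ennreal (post_mass_real m Q g k)"
  using post_mass_finite[OF assms, where Q = Q and k = k] by (simp add: post_mass_real_def ennreal_enn2real)

lemma evidence_eq_ennreal: "m \<le> n \<Longrightarrow> evidence m = ennreal (evidence_real m)"
  using evidence_pos_finite(2) by (simp add: evidence_real_def ennreal_enn2real)

lemma evidence_real_pos: "m \<le> n \<Longrightarrow> 0 < evidence_real m"
  using evidence_pos_finite by (simp add: evidence_real_def enn2real_positive_iff zero_less_iff_neq_zero)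

lemma post_mass_real_const_indep: "post_mass_real m Q (\<lambda>_. 1) k = post_mass_real m Q (\<lambda>_. 1) k'"
  unfolding post_mass_real_def by (rule arg_cong[OF post_mass_const_indep])

lemma post_mass_real_mono:
  assumes "m \<le> n" "\<And>c. c \<in> P \<Longrightarrow> Q c \<Longrightarrow> Q' c" "\<And>x. x \<in> space J \<Longrightarrow> g x \<le> 1"
  shows "post_mass_real m Q g k \<le> post_mass_real m Q' (\<lambda>_. 1) k"
proof -
  have "post_mass m Q g k \<le> post_mass m Q' (\<lambda>_. 1) k"
    by (rule post_mass_mono) (use assms path_lik_le in auto)
  then show ?thesis
    using post_mass_finite[OF assms(1), of "\<lambda>_. 1" Q' k] by (simp add: post_mass_real_def enn2real_mono)
qed

lemma sets_post [measurable_cong]: "sets (post m) = sets prior"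
  and space_post: "space (post m) = space prior"
  by (simp_all add: cp_post_def normalize_by_def)

lemma event_cp_X_measurable:
  assumes k: "k \<in> {1..n}" and B: "B \<in> sets J"
  shows "{\<omega> \<in> space prior. Q (fst \<omega>) \<and> cp_X k \<omega> \<in> B} \<in> sets prior"
proof -
  have "{\<omega> \<in> space prior. Q (fst \<omega>)} \<inter> (cp_X k -` B \<inter> space prior) \<in> sets prior"
    using event_measurable measurable_sets[OF cp_X_measurable[OF k] B] by blast
  moreover have "{\<omega> \<in> space prior. Q (fst \<omega>)} \<inter> (cp_X k -` B \<inter> space prior) =
      {\<omega> \<in> space prior. Q (fst \<omega>) \<and> cp_X k \<omega> \<in> B}"
    by auto
  ultimately show ?thesis by simp
qed

lemma emeasure_post_event_cp_X:
  assumes m: "m \<le> n" and k: "k \<in> {1..n}" and B: "B \<in> sets J"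
  shows "emeasure (post m) {\<omega> \<in> space prior. Q (fst \<omega>) \<and> cp_X k \<omega> \<in> B} =
    ennreal (post_mass_real m Q (indicator B) k / evidence_real m)"
proof -
  let ?S = "{\<omega> \<in> space prior. Q (fst \<omega>) \<and> cp_X k \<omega> \<in> B}"
  let ?F = "\<lambda>\<omega>. (if Q (fst \<omega>) then indicator B (cp_X k \<omega>) else 0) * ennreal (cp_lik p y m \<omega>)"
  have "emeasure (post m) ?S = (\<integral>\<^sup>+\<omega>. ennreal (cp_lik p y m \<omega>) / evidence m * indicator ?S \<omega> \<partial>prior)"
    unfolding cp_post_def normalize_by_def nn_integral_cp_lik[OF m]
    by (rule emeasure_density) (use cp_lik_measurable[OF m] event_cp_X_measurable[OF k B] in auto)
  also have "\<dots> = (\<integral>\<^sup>+\<omega>. ?F \<omega> / evidence m \<partial>prior)"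
    by (rule nn_integral_cong) (auto simp: indicator_def)
  also have "\<dots> = post_mass m Q (indicator B) k / evidence m"
    using nn_integral_prior_eq_post_mass[OF m k, of "indicator B" Q] B
    by (simp add: nn_integral_divide event_integrand_measurable[OF m k])
  also have "\<dots> = ennreal (post_mass_real m Q (indicator B) k / evidence_real m)"
    using post_mass_eq_ennreal[OF m, of "indicator B"] evidence_eq_ennreal[OF m] evidence_real_pos[OF m]
    by (simp add: divide_ennreal post_mass_real_nonneg indicator_def)
  finally show ?thesis .
qed

lemma emeasure_post_event:
  assumes m: "m \<le> n"
  shows "emeasure (post m) {\<omega> \<in> space prior. Q (fst \<omega>)} =
    ennreal (post_mass_real m Q (\<lambda>_. 1) k / evidence_real m)"
proof -
  have "{\<omega> \<in> space prior. Q (fst \<omega>)} = {\<omega> \<in> space prior. Q (fst \<omega>) \<and> cp_X 1 \<omega> \<in> space J}"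
    using measurable_space[OF cp_X_measurable] n_pos by auto
  moreover have "segment_lik m c a (indicator (space J)) 1 = segment_lik m c a (\<lambda>_. 1) 1" for c a
    unfolding segment_lik_def by (rule nn_integral_cong) simp
  then have "post_mass m Q (indicator (space J)) 1 = post_mass m Q (\<lambda>_. 1) 1"
    unfolding post_mass_def path_lik_def by (simp only:)
  ultimately show ?thesis
    using emeasure_post_event_cp_X[OF m _ sets.top, of 1 Q] n_pos post_mass_real_const_indep[of m Q 1 k]
    by (simp add: post_mass_real_def)
qed

lemma cp_ev_eq: "cp_ev q n J i j = {\<omega> \<in> space prior. fst \<omega> i = j}"
  by (simp add: cp_ev_def cp_C_def)

lemma cp_ct_eq:
  assumes b: "b < n"
  shows "cp_ct q n J p y j b = post_mass_real b (\<lambda>c. c (Suc b) = Suc b \<and> c b = j) (\<lambda>_. 1) k /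
    post_mass_real b (\<lambda>c. c (Suc b) = Suc b) (\<lambda>_. 1) k"
proof -
  let ?D = "cp_ev q n J (b + 1) (b + 1)" and ?E = "cp_ev q n J b j"
  have D: "?D \<in> sets (post b)" and E: "?E \<in> sets (post b)"
    unfolding cp_ev_eq sets_post by (rule event_measurable)+
  have DE: "?D \<inter> ?E = {\<omega> \<in> space prior. fst \<omega> (Suc b) = Suc b \<and> fst \<omega> b = j}"
    unfolding cp_ev_eq by auto
  have "emeasure (cond_on (post b) ?D) ?E =
      ennreal (post_mass_real b (\<lambda>c. c (Suc b) = Suc b \<and> c b = j) (\<lambda>_. 1) k /
        post_mass_real b (\<lambda>c. c (Suc b) = Suc b) (\<lambda>_. 1) k)"
    unfolding emeasure_cond_on[OF D E] DE unfolding cp_ev_eq Suc_eq_plus1[symmetric]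
      emeasure_post_event[of b "\<lambda>c. c (Suc b) = Suc b \<and> c b = j" k, simplified, OF less_imp_le[OF b]]
      emeasure_post_event[of b "\<lambda>c. c (Suc b) = Suc b" k, simplified, OF less_imp_le[OF b]]
    by (rule ennreal_divide_ratio) (simp_all add: post_mass_real_nonneg evidence_real_pos less_imp_le[OF b])
  then show ?thesis using b by (simp add: cp_ct_def measure_def post_mass_real_nonneg)
qed

lemma cp_ct_last:
  "cp_ct q n J p y j n = post_mass_real n (\<lambda>c. c n = j) (\<lambda>_. 1) k / evidence_real n"
  using emeasure_post_event[of n "\<lambda>c. c n = j" k] evidence_real_pos[of n]
  by (simp add: cp_ct_def measure_def cp_ev_eq post_mass_real_nonneg)

lemma cp_qt_eq:
  "cp_qt q n J p y i = post_mass_real n (\<lambda>c. c i = i) (\<lambda>_. 1) k / evidence_real n"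
  using emeasure_post_event[of n "\<lambda>c. c i = i" k] evidence_real_pos[of n]
  by (simp add: cp_qt_def measure_def cp_ev_eq post_mass_real_nonneg)

lemma sets_cp_H: "sets (cp_H q n J p y j b) = sets J"
  by (simp add: cp_H_def)

lemma emeasure_cp_H:
  assumes b: "b \<in> {1..n}" and S: "S \<in> sets J"
  shows "emeasure (cp_H q n J p y j b) S =
    ennreal (post_mass_real b (\<lambda>c. c b = j) (indicator S) b / post_mass_real b (\<lambda>c. c b = j) (\<lambda>_. 1) b)"
proof -
  let ?E = "cp_ev q n J b j"
  have bn: "b \<le> n" using b by simp
  have X: "cp_X b \<in> measurable (post b) J" and Xc: "cp_X b \<in> measurable (cond_on (post b) ?E) J"
    using cp_X_measurable[OF b] by (simp_all cong: measurable_cong_sets)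
  have E: "?E \<in> sets (post b)" unfolding cp_ev_eq sets_post by (rule event_measurable)
  have T: "cp_X b -` S \<inter> space prior \<in> sets (post b)"
    using measurable_sets[OF X S] space_post by simp
  have ET: "?E \<inter> (cp_X b -` S \<inter> space prior) = {\<omega> \<in> space prior. fst \<omega> b = j \<and> cp_X b \<omega> \<in> S}"
    unfolding cp_ev_eq by auto
  have "emeasure (cond_on (post b) ?E) (cp_X b -` S \<inter> space prior) =
      ennreal (post_mass_real b (\<lambda>c. c b = j) (indicator S) b / post_mass_real b (\<lambda>c. c b = j) (\<lambda>_. 1) b)"
    unfolding emeasure_cond_on[OF E T] ET unfolding cp_ev_eq
      emeasure_post_event_cp_X[OF bn b S, of "\<lambda>c. c b = j", simplified]
      emeasure_post_event[OF bn, of "\<lambda>c. c b = j" b, simplified]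
    by (rule ennreal_divide_ratio) (simp_all add: post_mass_real_nonneg evidence_real_pos[OF bn])
  then show ?thesis
    unfolding cp_H_def using emeasure_distr[OF Xc S] by (simp add: space_post)
qed

lemma post_mass_real_renewal:
  assumes b1: "1 \<le> b" and bn: "b < n"
    and Q: "\<And>c c'. (\<And>l. l \<le> b \<Longrightarrow> c l = c' l) \<Longrightarrow> Q c = Q c'"
  shows "post_mass_real n (\<lambda>c. c (Suc b) = Suc b \<and> Q c) g b =
      enn2real (head_mass b Q g) * enn2real (\<Sum>t\<in>tails b. tail_weight b t * tail_evidence b t)"
    "post_mass_real b (\<lambda>c. c (Suc b) = Suc b \<and> Q c) g b =
      enn2real (head_mass b Q g) * enn2real (\<Sum>t\<in>tails b. tail_weight b t)"
  using post_mass_renewal[OF b1 bn Q] by (simp_all add: post_mass_real_def enn2real_mult)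

lemma emeasure_post_renewal_cp_X:
  assumes b1: "1 \<le> b" and bn: "b < n" and S: "S \<in> sets J"
  shows "emeasure (post n) ({\<omega> \<in> space prior. fst \<omega> b = a \<and> fst \<omega> (Suc b) = Suc b} \<inter> (cp_X b -` S \<inter> space prior))
     = ennreal (cp_ct q n J p y a b * cp_qt q n J p y (Suc b)) * emeasure (cp_H q n J p y a b) S"
proof -
  have b: "b \<in> {1..n}" using b1 bn by simp
  define E where "E = (\<lambda>c::nat \<Rightarrow> nat. c b = a)"
  let ?DE = "\<lambda>c. c (Suc b) = Suc b \<and> E c" and ?D = "\<lambda>c. c (Suc b) = Suc b"
  define u where "u = enn2real (ennreal (1 - q a (Suc b)))"
  define \<alpha> where "\<alpha> = post_mass_real b E (indicator S) b"
  define \<beta> where "\<beta> = post_mass_real b E (\<lambda>_. 1) b"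
  define x where "x = enn2real (head_mass b (\<lambda>_. True) (\<lambda>_. 1))"
  define t where "t = enn2real (\<Sum>t\<in>tails b. tail_weight b t)"
  define t' where "t' = enn2real (\<Sum>t\<in>tails b. tail_weight b t * tail_evidence b t)"
  have E_cong: "\<And>c c'. (\<And>l. l \<le> b \<Longrightarrow> c l = c' l) \<Longrightarrow> E c = E c'" by (simp add: E_def)
  have head_real: "enn2real (head_mass b E g) = u * post_mass_real b E g b" for g
    unfolding E_def head_mass_at[OF b1 bn] u_def post_mass_real_def by (simp add: enn2real_mult)
  note DE = post_mass_real_renewal[OF b1 bn, where Q = E, OF E_cong, unfolded head_real, folded t_def t'_def]
  note D = post_mass_real_renewal[OF b1 bn, where Q = "\<lambda>_. True" and g = "\<lambda>_. 1", simplified,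
      folded x_def t_def t'_def]
  have le: "u * \<beta> * t \<le> x * t"
    using post_mass_real_mono[of b ?DE ?D "\<lambda>_. 1" b] bn DE(2) D(2) by (simp add: \<beta>_def)
  have "\<alpha> \<le> \<beta>" unfolding \<alpha>_def \<beta>_def by (rule post_mass_real_mono) (use bn in \<open>auto simp: indicator_def\<close>)
  then have key: "u * \<alpha> * t' / evidence_real n = u * \<beta> * t / (x * t) * (x * t' / evidence_real n) * (\<alpha> / \<beta>)"
    using enn2real_sum_tail_weight_eq_0[OF b1 bn]
    by (intro ratio_chain_identity le) (simp_all add: u_def \<alpha>_def t_def t'_def post_mass_real_nonneg)
  have ct: "cp_ct q n J p y a b = u * \<beta> * t / (x * t)"
    using cp_ct_eq[OF bn, of a b] DE(2) D(2) by (simp add: E_def \<beta>_def)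
  have qt: "cp_qt q n J p y (Suc b) = x * t' / evidence_real n"
    using cp_qt_eq[of "Suc b" b] D(1) by simp
  have "0 \<le> cp_ct q n J p y a b * cp_qt q n J p y (Suc b)"
    by (simp add: cp_ct_def cp_qt_def)
  moreover have "{\<omega> \<in> space prior. fst \<omega> b = a \<and> fst \<omega> (Suc b) = Suc b} \<inter> (cp_X b -` S \<inter> space prior) =
      {\<omega> \<in> space prior. ?DE (fst \<omega>) \<and> cp_X b \<omega> \<in> S}"
    by (auto simp: E_def)
  ultimately show ?thesis
    using emeasure_post_event_cp_X[OF order_refl b S, of ?DE] emeasure_cp_H[OF b S, of a] key DE(1)
    by (simp add: ct qt E_def \<alpha>_def \<beta>_def ennreal_mult'[symmetric])
qed

lemma emeasure_post_last_cp_X: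
  assumes S: "S \<in> sets J"
  shows "emeasure (post n) ({\<omega> \<in> space prior. fst \<omega> n = a} \<inter> (cp_X n -` S \<inter> space prior))
     = ennreal (cp_ct q n J p y a n) * emeasure (cp_H q n J p y a n) S"
proof -
  have nI: "n \<in> {1..n}" using n_pos by simp
  define \<alpha> where "\<alpha> = post_mass_real n (\<lambda>c. c n = a) (indicator S) n"
  define \<beta> where "\<beta> = post_mass_real n (\<lambda>c. c n = a) (\<lambda>_. 1) n"
  have "\<alpha> \<le> \<beta>" unfolding \<alpha>_def \<beta>_def by (rule post_mass_real_mono) (auto simp: indicator_def)
  then have "\<alpha> / evidence_real n = \<beta> / evidence_real n * (\<alpha> / \<beta>)"
    using post_mass_real_nonneg[of n "\<lambda>c. c n = a" "indicator S" n] by (cases "\<beta> = 0") (auto simp: \<alpha>_def)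
  moreover have "{\<omega> \<in> space prior. fst \<omega> n = a} \<inter> (cp_X n -` S \<inter> space prior) =
      {\<omega> \<in> space prior. fst \<omega> n = a \<and> cp_X n \<omega> \<in> S}"
    by auto
  moreover have "0 \<le> \<beta> / evidence_real n"
    using evidence_real_pos[of n] by (simp add: \<beta>_def post_mass_real_nonneg)
  ultimately show ?thesis
    using emeasure_post_event_cp_X[OF order_refl nI S, of "\<lambda>c. c n = a"] emeasure_cp_H[OF nI S, of a]
      cp_ct_last[of a n]
    by (simp add: \<alpha>_def \<beta>_def ennreal_mult'[symmetric])
qed

definition segment_end_event :: "nat \<Rightarrow> nat \<Rightarrow> ((nat \<Rightarrow> nat) \<times> (nat \<Rightarrow> 'x)) set" where
  "segment_end_event a b = {\<omega> \<in> space prior. fst \<omega> b = a \<and> (b = n \<or> fst \<omega> (Suc b) = Suc b)}"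

definition segment_end_weight :: "nat \<Rightarrow> nat \<Rightarrow> real" where
  "segment_end_weight a b =
    (if b < n then cp_ct q n J p y a b * cp_qt q n J p y (Suc b) else cp_ct q n J p y a b)"

lemma integral_segment_end:
  fixes f :: "'x \<Rightarrow> 'b::{banach, second_countable_topology}"
  assumes b: "b \<in> {1..n}" and f_int: "integrable (cp_H q n J p y a b) f" and f_meas: "f \<in> borel_measurable J"
  shows "integrable (post n) (\<lambda>\<omega>. indicator (segment_end_event a b) \<omega> *\<^sub>R f (cp_X b \<omega>))"
    "(\<integral>\<omega>. indicator (segment_end_event a b) \<omega> *\<^sub>R f (cp_X b \<omega>) \<partial>post n) =
      segment_end_weight a b *\<^sub>R (\<integral>x. f x \<partial>cp_H q n J p y a b)"
proof -
  have A: "segment_end_event a b \<in> sets (post n)"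
    unfolding segment_end_event_def sets_post by (rule event_measurable)
  have X: "cp_X b \<in> measurable (post n) J"
    using cp_X_measurable[OF b] by (simp cong: measurable_cong_sets)
  have w: "0 \<le> segment_end_weight a b"
    by (simp add: segment_end_weight_def cp_ct_def cp_qt_def)
  have "emeasure (post n) (segment_end_event a b \<inter> (cp_X b -` S \<inter> space (post n))) =
      ennreal (segment_end_weight a b) * emeasure (cp_H q n J p y a b) S" if S: "S \<in> sets J" for S
  proof (cases "b < n")
    case True
    then show ?thesis
      using emeasure_post_renewal_cp_X[of b S a] b S
      by (simp add: segment_end_event_def segment_end_weight_def space_post)
  next
    case False
    then have "b = n" using b by simp
    then show ?thesis
      using emeasure_post_last_cp_X[OF S, of a]
      by (simp add: segment_end_event_def segment_end_weight_def space_post)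
  qed
  note * = integral_indicator_comp_scaled[OF A X w sets_cp_H this f_int f_meas]
  show "integrable (post n) (\<lambda>\<omega>. indicator (segment_end_event a b) \<omega> *\<^sub>R f (cp_X b \<omega>))"
    by (rule *(1))
  show "(\<integral>\<omega>. indicator (segment_end_event a b) \<omega> *\<^sub>R f (cp_X b \<omega>) \<partial>post n) =
      segment_end_weight a b *\<^sub>R (\<integral>x. f x \<partial>cp_H q n J p y a b)"
    by (rule *(2))
qed

lemma cp_X_eq_sum_segment_end:
  fixes f :: "'x \<Rightarrow> 'b::real_vector"
  assumes \<omega>: "\<omega> \<in> space prior" and k: "k \<in> {1..n}"
  shows "f (cp_X k \<omega>) = (\<Sum>b\<in>{k..n}. \<Sum>a\<in>{0..k}. indicator (segment_end_event a b) \<omega> *\<^sub>R f (cp_X b \<omega>))"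
proof -
  obtain c z where cz: "\<omega> = (c, z)" by (cases \<omega>)
  have c: "c \<in> P" using \<omega> cz by (simp add: space_prior)
  obtain e where e: "e \<in> {k..n}"
    and end_iff: "\<And>b a. b \<in> {k..n} \<Longrightarrow> a \<le> k \<Longrightarrow> (c b = a \<and> (b = n \<or> c (Suc b) = Suc b)) \<longleftrightarrow> (b = e \<and> a = c k)"
    using cp_path_segment_end[OF c k] by blast
  have ck: "c k \<le> k" using cp_pathsD(1)[OF c] by simp
  have "(\<Sum>b\<in>{k..n}. \<Sum>a\<in>{0..k}. indicator (segment_end_event a b) \<omega> *\<^sub>R f (cp_X b \<omega>))
      = (\<Sum>b\<in>{k..n}. \<Sum>a\<in>{0..k}. (if b = e \<and> a = c k then f (cp_X b \<omega>) else 0))"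
    using \<omega> cz end_iff by (intro sum.cong refl) (simp add: segment_end_event_def indicator_def)
  also have "\<dots> = (\<Sum>b\<in>{k..n}. if b = e then f (cp_X b \<omega>) else 0)"
    using ck by (intro sum.cong refl) (auto simp: sum.delta')
  also have "\<dots> = f (cp_X e \<omega>)"
    using e by (simp add: sum.delta')
  also have "cp_X e \<omega> = cp_X k \<omega>"
    using end_iff[OF e ck] cz by (simp add: cp_X_def)
  finally show ?thesis ..
qed

lemma integral_cp_X_eq_sum_segment_end:
  fixes f :: "'x \<Rightarrow> 'b::{banach, second_countable_topology}"
  assumes k: "k \<in> {1..n}" and f_meas: "f \<in> borel_measurable J"
    and f_int: "\<And>a b. b \<in> {k..n} \<Longrightarrow> a \<le> k \<Longrightarrow> integrable (cp_H q n J p y a b) f"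
  shows "(\<integral>\<omega>. f (cp_X k \<omega>) \<partial>post n) =
    (\<Sum>b\<in>{k..n}. \<Sum>a\<in>{0..k}. segment_end_weight a b *\<^sub>R (\<integral>x. f x \<partial>cp_H q n J p y a b))"
proof -
  have b: "b \<in> {1..n}" if "b \<in> {k..n}" for b using that k by auto
  note segment_end_term = integral_segment_end[OF b f_int f_meas]
  have "(\<integral>\<omega>. f (cp_X k \<omega>) \<partial>post n) =
      (\<integral>\<omega>. (\<Sum>b\<in>{k..n}. \<Sum>a\<in>{0..k}. indicator (segment_end_event a b) \<omega> *\<^sub>R f (cp_X b \<omega>)) \<partial>post n)"
    by (rule Bochner_Integration.integral_cong[OF refl]) (use cp_X_eq_sum_segment_end[OF _ k] in \<open>simp add: space_post\<close>)
  also have "\<dots> = (\<Sum>b\<in>{k..n}. \<integral>\<omega>. (\<Sum>a\<in>{0..k}. indicator (segment_end_event a b) \<omega> *\<^sub>R f (cp_X b \<omega>)) \<partial>post n)"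
    by (intro Bochner_Integration.integral_sum Bochner_Integration.integrable_sum segment_end_term(1)) auto
  also have "\<dots> = (\<Sum>b\<in>{k..n}. \<Sum>a\<in>{0..k}. \<integral>\<omega>. indicator (segment_end_event a b) \<omega> *\<^sub>R f (cp_X b \<omega>) \<partial>post n)"
    by (intro sum.cong refl Bochner_Integration.integral_sum segment_end_term(1)) auto
  also have "\<dots> = (\<Sum>b\<in>{k..n}. \<Sum>a\<in>{0..k}. segment_end_weight a b *\<^sub>R (\<integral>x. f x \<partial>cp_H q n J p y a b))"
    using segment_end_term(2) by simp
  finally show ?thesis .
qed


lemma integral_cp_X_step:
  fixes f :: "'x \<Rightarrow> 'b::{banach, second_countable_topology}"
  assumes i: "0 < i" "i < n" and f_meas: "f \<in> borel_measurable J"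
    and f_int: "\<And>a b. 1 \<le> b \<Longrightarrow> b \<le> n \<Longrightarrow> a \<le> b \<Longrightarrow> integrable (cp_H q n J p y a b) f"
  defines "T a b \<equiv> segment_end_weight a b *\<^sub>R (\<integral>x. f x \<partial>cp_H q n J p y a b)"
  shows "(\<integral>\<omega>. f (cp_X i \<omega>) \<partial>post n) = (\<integral>\<omega>. f (cp_X (i + 1) \<omega>) \<partial>post n)
    - (\<Sum>b\<in>{i + 1..n - 1}. T (i + 1) b) - T (i + 1) n + (\<Sum>a\<in>{0..i}. T a i)"
proof -
  have E: "(\<integral>\<omega>. f (cp_X k \<omega>) \<partial>post n) = (\<Sum>b\<in>{k..n}. \<Sum>a\<in>{0..k}. T a b)" if "k \<in> {1..n}" for k
    unfolding T_def using that by (intro integral_cp_X_eq_sum_segment_end f_meas f_int) auto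
  obtain m where m: "n = Suc m" using i by (cases n) auto
  have "(\<integral>\<omega>. f (cp_X i \<omega>) \<partial>post n) = (\<Sum>a\<in>{0..i}. T a i) + (\<Sum>b\<in>{i + 1..n}. \<Sum>a\<in>{0..i}. T a b)"
    using E[of i] i by (simp add: sum.atLeast_Suc_atMost)
  moreover have "(\<integral>\<omega>. f (cp_X (i + 1) \<omega>) \<partial>post n) =
      (\<Sum>b\<in>{i + 1..n}. \<Sum>a\<in>{0..i}. T a b) + (\<Sum>b\<in>{i + 1..n - 1}. T (i + 1) b) + T (i + 1) n"
    using E[of "i + 1"] i unfolding m by (simp add: sum.distrib sum.cl_ivl_Suc)
  ultimately show ?thesis by (simp add: algebra_simps)
qed

end

theorem mainTheorem12:
  fixes n :: nat and q :: "nat \<Rightarrow> nat \<Rightarrow> real"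
    and J :: "'x measure" and \<psi> :: "'y measure"
    and p :: "'x \<Rightarrow> 'y \<Rightarrow> real" and y :: "nat \<Rightarrow> 'y"
    and f :: "'x \<Rightarrow> real ^ 'u" and i :: nat
  assumes n: "n \<ge> 1"
    and J: "prob_space J"
    and psi: "sigma_finite_measure \<psi>"
    and q: "\<And>j k. j < k \<Longrightarrow> k \<le> n \<Longrightarrow> 0 \<le> q j k \<and> q j k \<le> 1"
    and p_meas: "(\<lambda>(x, v). p x v) \<in> borel_measurable (J \<Otimes>\<^sub>M \<psi>)"
    and p_nonneg: "\<And>x v. x \<in> space J \<Longrightarrow> v \<in> space \<psi> \<Longrightarrow> 0 \<le> p x v"
    and p_dens: "\<And>x. x \<in> space J \<Longrightarrow> (\<integral>\<^sup>+ v. ennreal (p x v) \<partial>\<psi>) = 1"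
    and y: "\<And>l. l \<in> {1..n} \<Longrightarrow> y l \<in> space \<psi>"
    and pos: "\<And>j k. 0 < j \<Longrightarrow> j \<le> k \<Longrightarrow> k \<le> n \<Longrightarrow>
                (\<integral>x. (\<Prod>l\<in>{j..k}. p x (y l)) \<partial>J) > 0"
    and f_meas: "f \<in> borel_measurable J"
    and f_int: "\<And>j k. 1 \<le> k \<Longrightarrow> k \<le> n \<Longrightarrow> j \<le> k \<Longrightarrow> integrable (cp_H q n J p y j k) f"
    and i: "0 < i" "i < n"
  shows "(\<integral>\<omega>. f (cp_X i \<omega>) \<partial>cp_post q n J p y n) =
           (\<integral>\<omega>. f (cp_X (i + 1) \<omega>) \<partial>cp_post q n J p y n)
         - (\<Sum>l\<in>{i + 1..n - 1}. (cp_ct q n J p y (i + 1) l * cp_qt q n J p y (l + 1))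
                                   *\<^sub>R (\<integral>x. f x \<partial>cp_H q n J p y (i + 1) l))
         - cp_ct q n J p y (i + 1) n *\<^sub>R (\<integral>x. f x \<partial>cp_H q n J p y (i + 1) n)
         + (\<Sum>l\<in>{0..i}. (cp_ct q n J p y l i * cp_qt q n J p y (i + 1))
                                   *\<^sub>R (\<integral>x. f x \<partial>cp_H q n J p y l i))"
proof -
  have "cp_trans_probs n q" unfolding cp_trans_probs_def using q by blast
  then interpret changepoint_model n q J \<psi> p y
    by (rule changepoint_model.intro[OF n J _ p_meas p_nonneg y pos])
  have "(\<Sum>b\<in>{i + 1..n - 1}. segment_end_weight (i + 1) b *\<^sub>R (\<integral>x. f x \<partial>cp_H q n J p y (i + 1) b)) =
      (\<Sum>l\<in>{i + 1..n - 1}. (cp_ct q n J p y (i + 1) l * cp_qt q n J p y (l + 1))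
        *\<^sub>R (\<integral>x. f x \<partial>cp_H q n J p y (i + 1) l))"
    by (intro sum.cong) (auto simp: segment_end_weight_def)
  moreover have "segment_end_weight (i + 1) n = cp_ct q n J p y (i + 1) n"
    by (simp add: segment_end_weight_def)
  moreover have "(\<Sum>a\<in>{0..i}. segment_end_weight a i *\<^sub>R (\<integral>x. f x \<partial>cp_H q n J p y a i)) =
      (\<Sum>l\<in>{0..i}. (cp_ct q n J p y l i * cp_qt q n J p y (i + 1)) *\<^sub>R (\<integral>x. f x \<partial>cp_H q n J p y l i))"
    using i by (intro sum.cong) (auto simp: segment_end_weight_def)
  ultimately show ?thesis
    using integral_cp_X_step[OF i f_meas f_int] by metis
qed

end
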